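(* Let $T$ be a bimonad on a left closed monoidal category $\mathcal C$. (a) If $T$ admits a left antipode, it is unique. (b) If $T$ is a left Hopf monad, its left antipode $s^l$ satisfies, for all objects $X,Y,Z$: $s^l_{X,Y}\mu_{[TX,Y]^l}=[X,\mu_Y]^l\,s^l_{X,TY}\,T(s^l_{TX,Y})\,T^2[\mu_X,Y]^l$; $s^l_{X,Y}\eta_{[TX,Y]^l}=[\eta_X,\eta_Y]^l$; $s^l_{X\otimes Y,Z}\,T[T_2(X,Y),Z]^l=[X,s^l_{Y,Z}]^l\,s^l_{X,[TY,Z]^l}$; $s^l_{T\mathbb 1,X}[T_0,X]^l=\mathrm{id}_{TX}$, where the canonical isomorphisms $[X\otimes Y,Z]^l\cong[X,[Y,Z]^l]^l$ and $[\mathbb 1,X]^l\cong X$ are suppressed. (The analogous statements hold for right antipodes on right closed categories.)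
   Context: Monoidal categories are strict. A bimonad on $\mathcal C$ is a monad $(T,\mu,\eta)$ with a comonoidal structure $T_2(X,Y)\colon T(X\otimes Y)\to TX\otimes TY$, $T_0\colon T\mathbb 1\to\mathbb 1$ such that $\mu,\eta$ are comonoidal. $T$ is a left Hopf monad if $H^l_{X,Y}=(TX\otimes\mu_Y)T_2(X,TY)$ is invertible for all $X,Y$. A monoidal category is left closed if each $?\otimes X$ has a right adjoint $[X,?]^l$, with counit $\mathrm{ev}^X_Y\colon[X,Y]^l\otimes X\to Y$ and unit $\mathrm{coev}^X_Y\colon Y\to[X,Y\otimes X]^l$. A left antipode for $T$ is a natural transformation $s^l_{X,Y}\colon T[TX,Y]^l\to[X,TY]^l$ such that for all $X,Y$: (1) $T\big(\mathrm{ev}^X_Y([\eta_X,Y]^l\otimes X)\big)=\mathrm{ev}^{TX}_{TY}\big(s^l_{TX,Y}\,T[\mu_X,Y]^l\otimes TX\big)T_2([TX,Y]^l,X)$; (2) $[X,TY\otimes\eta_X]^l\,\mathrm{coev}^X_{TY}=[X,(TY\otimes\mu_X)T_2(Y,TX)]^l\,s^l_{X,Y\otimes TX}\,T(\mathrm{coev}^{TX}_Y)$. It is a known result that a bimonad on a left closed category is a left Hopf monad iff it admits a left antipode. *)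

theory Defs
  imports Main
begin

record ('o,'m) mcat =
  ob  :: "'o set"
  arr :: "'m set"
  dm  :: "'m \<Rightarrow> 'o"
  cd  :: "'m \<Rightarrow> 'o"
  idm :: "'o \<Rightarrow> 'm"
  cmp :: "'m \<Rightarrow> 'm \<Rightarrow> 'm"   (* cmp C g f = g \<circ> f *)
  tob :: "'o \<Rightarrow> 'o \<Rightarrow> 'o"
  tar :: "'m \<Rightarrow> 'm \<Rightarrow> 'm"
  one :: "'o"

definition hom :: "('o,'m,'x) mcat_scheme \<Rightarrow> 'o \<Rightarrow> 'o \<Rightarrow> 'm set" where
  "hom C X Y = {f \<in> arr C. dm C f = X \<and> cd C f = Y}"

definition strict_moncat :: "('o,'m,'x) mcat_scheme \<Rightarrow> bool" where
  "strict_moncat C \<longleftrightarrow>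
    (\<forall>f\<in>arr C. dm C f \<in> ob C \<and> cd C f \<in> ob C) \<and>
    (\<forall>X\<in>ob C. idm C X \<in> hom C X X) \<and>
    (\<forall>f\<in>arr C. \<forall>g\<in>arr C. cd C f = dm C g \<longrightarrow> cmp C g f \<in> hom C (dm C f) (cd C g)) \<and>
    (\<forall>f\<in>arr C. cmp C f (idm C (dm C f)) = f \<and> cmp C (idm C (cd C f)) f = f) \<and>
    (\<forall>f\<in>arr C. \<forall>g\<in>arr C. \<forall>h\<in>arr C. cd C f = dm C g \<longrightarrow> cd C g = dm C h \<longrightarrow>
        cmp C h (cmp C g f) = cmp C (cmp C h g) f) \<and>
    one C \<in> ob C \<and>
    (\<forall>X\<in>ob C. \<forall>Y\<in>ob C. tob C X Y \<in> ob C) \<and>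
    (\<forall>f\<in>arr C. \<forall>g\<in>arr C. tar C f g \<in> hom C (tob C (dm C f) (dm C g)) (tob C (cd C f) (cd C g))) \<and>
    (\<forall>X\<in>ob C. \<forall>Y\<in>ob C. tar C (idm C X) (idm C Y) = idm C (tob C X Y)) \<and>
    (\<forall>f\<in>arr C. \<forall>g\<in>arr C. \<forall>f'\<in>arr C. \<forall>g'\<in>arr C. cd C f = dm C g \<longrightarrow> cd C f' = dm C g' \<longrightarrow>
        tar C (cmp C g f) (cmp C g' f') = cmp C (tar C g g') (tar C f f')) \<and>
    (\<forall>X\<in>ob C. \<forall>Y\<in>ob C. \<forall>Z\<in>ob C. tob C (tob C X Y) Z = tob C X (tob C Y Z)) \<and>
    (\<forall>X\<in>ob C. tob C (one C) X = X \<and> tob C X (one C) = X) \<and>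
    (\<forall>f\<in>arr C. \<forall>g\<in>arr C. \<forall>h\<in>arr C. tar C (tar C f g) h = tar C f (tar C g h)) \<and>
    (\<forall>f\<in>arr C. tar C (idm C (one C)) f = f \<and> tar C f (idm C (one C)) = f)"

definition iso :: "('o,'m,'x) mcat_scheme \<Rightarrow> 'm \<Rightarrow> bool" where
  "iso C f \<longleftrightarrow> f \<in> arr C \<and> (\<exists>g\<in>hom C (cd C f) (dm C f).
      cmp C g f = idm C (dm C f) \<and> cmp C f g = idm C (cd C f))"

section \<open>Left closed structure: a right adjoint [X,?] of ? \<otimes> X given by evaluations\<close>

record ('o,'m) lclosed =
  ihob :: "'o \<Rightarrow> 'o \<Rightarrow> 'o"   (* ihob L X Y = [X,Y]^l *)
  evm  :: "'o \<Rightarrow> 'o \<Rightarrow> 'm"   (* evm L X Y = ev^X_Y : [X,Y]^l \<otimes> X \<rightarrow> Y *)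

definition left_closed :: "('o,'m,'x) mcat_scheme \<Rightarrow> ('o,'m,'y) lclosed_scheme \<Rightarrow> bool" where
  "left_closed C L \<longleftrightarrow>
    (\<forall>X\<in>ob C. \<forall>Y\<in>ob C. ihob L X Y \<in> ob C \<and>
       evm L X Y \<in> hom C (tob C (ihob L X Y) X) Y \<and>
       (\<forall>Z\<in>ob C. \<forall>f\<in>hom C (tob C Z X) Y.
          \<exists>!g. g \<in> hom C Z (ihob L X Y) \<and> cmp C (evm L X Y) (tar C g (idm C X)) = f))"

text \<open>Bifunctoriality of the internal hom: for f : X' \<rightarrow> X and g : Y \<rightarrow> Y',
  ihmor f g = [f,g]^l : [X,Y]^l \<rightarrow> [X',Y']^l. In particular [f,Y]^l = ihmor f (id Y)
  and [X,g]^l = ihmor (id X) g.\<close>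
definition ihmor :: "('o,'m,'x) mcat_scheme \<Rightarrow> ('o,'m,'y) lclosed_scheme \<Rightarrow> 'm \<Rightarrow> 'm \<Rightarrow> 'm" where
  "ihmor C L f g = (THE h. h \<in> hom C (ihob L (cd C f) (dm C g)) (ihob L (dm C f) (cd C g)) \<and>
      cmp C (evm L (dm C f) (cd C g)) (tar C h (idm C (dm C f))) =
      cmp C g (cmp C (evm L (cd C f) (dm C g)) (tar C (idm C (ihob L (cd C f) (dm C g))) f)))"

definition coev :: "('o,'m,'x) mcat_scheme \<Rightarrow> ('o,'m,'y) lclosed_scheme \<Rightarrow> 'o \<Rightarrow> 'o \<Rightarrow> 'm" where
  "coev C L X Y = (THE h. h \<in> hom C Y (ihob L X (tob C Y X)) \<and>
      cmp C (evm L X (tob C Y X)) (tar C h (idm C X)) = idm C (tob C Y X))"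

definition curry_iso :: "('o,'m,'x) mcat_scheme \<Rightarrow> ('o,'m,'y) lclosed_scheme \<Rightarrow> 'o \<Rightarrow> 'o \<Rightarrow> 'o \<Rightarrow> 'm" where
  "curry_iso C L X Y Z =
    (let k = (THE k. k \<in> hom C (tob C (ihob L (tob C X Y) Z) X) (ihob L Y Z) \<and>
                 cmp C (evm L Y Z) (tar C k (idm C Y)) = evm L (tob C X Y) Z)
     in (THE h. h \<in> hom C (ihob L (tob C X Y) Z) (ihob L X (ihob L Y Z)) \<and>
                 cmp C (evm L X (ihob L Y Z)) (tar C h (idm C X)) = k))"

text \<open>The canonical isomorphism [1,X]^l \<rightarrow> X is ev^1_X : [1,X]^l = [1,X]^l \<otimes> 1 \<rightarrow> X.\<close>

record ('o,'m) bimon =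
  Tob :: "'o \<Rightarrow> 'o"
  Tar :: "'m \<Rightarrow> 'm"
  mu  :: "'o \<Rightarrow> 'm"
  eta :: "'o \<Rightarrow> 'm"
  Ttwo :: "'o \<Rightarrow> 'o \<Rightarrow> 'm"
  Tzero :: "'m"

definition bimonad :: "('o,'m,'x) mcat_scheme \<Rightarrow> ('o,'m,'z) bimon_scheme \<Rightarrow> bool" where
  "bimonad C B \<longleftrightarrow>
    \<comment> \<open>T is an endofunctor\<close>
    (\<forall>X\<in>ob C. Tob B X \<in> ob C) \<and>
    (\<forall>f\<in>arr C. Tar B f \<in> hom C (Tob B (dm C f)) (Tob B (cd C f))) \<and>
    (\<forall>X\<in>ob C. Tar B (idm C X) = idm C (Tob B X)) \<and>
    (\<forall>f\<in>arr C. \<forall>g\<in>arr C. cd C f = dm C g \<longrightarrow> Tar B (cmp C g f) = cmp C (Tar B g) (Tar B f)) \<and>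
    \<comment> \<open>monad structure\<close>
    (\<forall>X\<in>ob C. mu B X \<in> hom C (Tob B (Tob B X)) (Tob B X) \<and> eta B X \<in> hom C X (Tob B X)) \<and>
    (\<forall>f\<in>arr C. cmp C (Tar B f) (mu B (dm C f)) = cmp C (mu B (cd C f)) (Tar B (Tar B f)) \<and>
               cmp C (Tar B f) (eta B (dm C f)) = cmp C (eta B (cd C f)) f) \<and>
    (\<forall>X\<in>ob C. cmp C (mu B X) (Tar B (mu B X)) = cmp C (mu B X) (mu B (Tob B X)) \<and>
               cmp C (mu B X) (eta B (Tob B X)) = idm C (Tob B X) \<and>
               cmp C (mu B X) (Tar B (eta B X)) = idm C (Tob B X)) \<and>
    \<comment> \<open>comonoidal structure\<close>
    (\<forall>X\<in>ob C. \<forall>Y\<in>ob C. Ttwo B X Y \<in> hom C (Tob B (tob C X Y)) (tob C (Tob B X) (Tob B Y))) \<and>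
    Tzero B \<in> hom C (Tob B (one C)) (one C) \<and>
    (\<forall>f\<in>arr C. \<forall>g\<in>arr C. cmp C (Ttwo B (cd C f) (cd C g)) (Tar B (tar C f g)) =
        cmp C (tar C (Tar B f) (Tar B g)) (Ttwo B (dm C f) (dm C g))) \<and>
    (\<forall>X\<in>ob C. \<forall>Y\<in>ob C. \<forall>Z\<in>ob C.
        cmp C (tar C (Ttwo B X Y) (idm C (Tob B Z))) (Ttwo B (tob C X Y) Z) =
        cmp C (tar C (idm C (Tob B X)) (Ttwo B Y Z)) (Ttwo B X (tob C Y Z))) \<and>
    (\<forall>X\<in>ob C. cmp C (tar C (Tzero B) (idm C (Tob B X))) (Ttwo B (one C) X) = idm C (Tob B X) \<and>
               cmp C (tar C (idm C (Tob B X)) (Tzero B)) (Ttwo B X (one C)) = idm C (Tob B X)) \<and>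
    \<comment> \<open>mu and eta are comonoidal\<close>
    (\<forall>X\<in>ob C. \<forall>Y\<in>ob C.
        cmp C (Ttwo B X Y) (mu B (tob C X Y)) =
        cmp C (tar C (mu B X) (mu B Y)) (cmp C (Ttwo B (Tob B X) (Tob B Y)) (Tar B (Ttwo B X Y))) \<and>
        cmp C (Ttwo B X Y) (eta B (tob C X Y)) = tar C (eta B X) (eta B Y)) \<and>
    cmp C (Tzero B) (mu B (one C)) = cmp C (Tzero B) (Tar B (Tzero B)) \<and>
    cmp C (Tzero B) (eta B (one C)) = idm C (one C)"

definition left_hopf :: "('o,'m,'x) mcat_scheme \<Rightarrow> ('o,'m,'z) bimon_scheme \<Rightarrow> bool" where
  "left_hopf C B \<longleftrightarrow> bimonad C B \<and>
    (\<forall>X\<in>ob C. \<forall>Y\<in>ob C.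
       iso C (cmp C (tar C (idm C (Tob B X)) (mu B Y)) (Ttwo B X (Tob B Y))))"

definition left_antipode ::
  "('o,'m,'x) mcat_scheme \<Rightarrow> ('o,'m,'y) lclosed_scheme \<Rightarrow> ('o,'m,'z) bimon_scheme \<Rightarrow>
   ('o \<Rightarrow> 'o \<Rightarrow> 'm) \<Rightarrow> bool" where
  "left_antipode C L B s \<longleftrightarrow>
    \<comment> \<open>s_{X,Y} : T[TX,Y]^l \<rightarrow> [X,TY]^l\<close>
    (\<forall>X\<in>ob C. \<forall>Y\<in>ob C. s X Y \<in> hom C (Tob B (ihob L (Tob B X) Y)) (ihob L X (Tob B Y))) \<and>
    \<comment> \<open>naturality in X and Y\<close>
    (\<forall>f\<in>arr C. \<forall>g\<in>arr C.
       cmp C (ihmor C L f (Tar B g)) (s (cd C f) (dm C g)) =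
       cmp C (s (dm C f) (cd C g)) (Tar B (ihmor C L (Tar B f) g))) \<and>
    \<comment> \<open>axiom (1)\<close>
    (\<forall>X\<in>ob C. \<forall>Y\<in>ob C.
       Tar B (cmp C (evm L X Y) (tar C (ihmor C L (eta B X) (idm C Y)) (idm C X))) =
       cmp C (evm L (Tob B X) (Tob B Y))
         (cmp C (tar C (cmp C (s (Tob B X) Y) (Tar B (ihmor C L (mu B X) (idm C Y))))
                        (idm C (Tob B X)))
                (Ttwo B (ihob L (Tob B X) Y) X))) \<and>
    \<comment> \<open>axiom (2)\<close>
    (\<forall>X\<in>ob C. \<forall>Y\<in>ob C.
       cmp C (ihmor C L (idm C X) (tar C (idm C (Tob B Y)) (eta B X))) (coev C L X (Tob B Y)) =
       cmp C (ihmor C L (idm C X) (cmp C (tar C (idm C (Tob B Y)) (mu B X)) (Ttwo B Y (Tob B X))))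
         (cmp C (s X (tob C Y (Tob B X))) (Tar B (coev C L (Tob B X) Y))))"

end

theory Submission
  imports Defs
begin

(*
  The key device is the "transposed antipode"
     sigma X Y = ev^X_{TY} (s_{X,Y} \<otimes> X) : T[TX,Y] \<otimes> X \<rightarrow> TY,
  which determines s (evaluation is a universal arrow), together with the Hopf operator
     H Y X = (TY \<otimes> \<mu>_X) T_2(Y,TX) : T(Y \<otimes> TX) \<rightarrow> TY \<otimes> TX.
  From the antipode axioms alone we build an explicit left inverse Hinv Y X of H Y X
  (lemma Hinv_H).  Axiom (2) says that H applied to sigma (T coev \<otimes> X) is TY \<otimes> \<eta>_X, so
  this composite is Hinv (TY \<otimes> \<eta>_X); by the triangle identity it determines sigma, hence s.
  This gives (a), uniqueness.  If T is left Hopf, H is invertible, so Hinv is its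
  two-sided inverse, and we obtain the closed formula (sigma_formula)
     sigma X Y = T(ev^{TX}_Y) Hinv (T[TX,Y] \<otimes> \<eta>_X).
  The four identities of (b) follow by transposing both sides and comparing them with this
  formula, using how H (hence Hinv) interacts with naturality, \<mu>, T_2 and T_0.
*)

locale closed_bimonad =
  fixes C :: "('o,'m,'x) mcat_scheme" and L :: "('o,'m,'y) lclosed_scheme" and B :: "('o,'m,'z) bimon_scheme"
  assumes SM: "strict_moncat C" and LC: "left_closed C L" and BM: "bimonad C B"
begin

abbreviation compose (infixr "\<cdot>" 55) where "g \<cdot> f \<equiv> cmp C g f"
abbreviation tensor_arr (infixr "\<otimes>" 60) where "f \<otimes> g \<equiv> tar C f g"
abbreviation tensor_ob (infixr "\<odot>" 60) where "X \<odot> Y \<equiv> tob C X Y"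
abbreviation I where "I X \<equiv> idm C X"
abbreviation T where "T f \<equiv> Tar B f"
abbreviation TO where "TO X \<equiv> Tob B X"
abbreviation M where "M X \<equiv> mu B X"
abbreviation E where "E X \<equiv> eta B X"
abbreviation T2 where "T2 X Y \<equiv> Ttwo B X Y"
abbreviation T0 where "T0 \<equiv> Tzero B"
abbreviation IH where "IH X Y \<equiv> ihob L X Y"
abbreviation ev where "ev X Y \<equiv> evm L X Y"
abbreviation hm where "hm f g \<equiv> ihmor C L f g"
abbreviation cv where "cv X Y \<equiv> coev C L X Y"
abbreviation Ar where "Ar \<equiv> arr C"
abbreviation Ob where "Ob \<equiv> ob C"
abbreviation Dm where "Dm f \<equiv> dm C f"
abbreviation Cd where "Cd f \<equiv> cd C f"
abbreviation U where "U \<equiv> one C"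

lemmas SM_unfolded = SM[unfolded strict_moncat_def hom_def mem_Collect_eq]

lemma ob_dm[simp]: "f \<in> Ar \<Longrightarrow> Dm f \<in> Ob"
  and ob_cd[simp]: "f \<in> Ar \<Longrightarrow> Cd f \<in> Ob"
  and ob_one[simp]: "U \<in> Ob"
  and ob_tob[simp]: "X \<in> Ob \<Longrightarrow> Y \<in> Ob \<Longrightarrow> X \<odot> Y \<in> Ob"
  and id_arr[simp]: "X \<in> Ob \<Longrightarrow> I X \<in> Ar"
  and id_dm[simp]: "X \<in> Ob \<Longrightarrow> Dm (I X) = X"
  and id_cd[simp]: "X \<in> Ob \<Longrightarrow> Cd (I X) = X"
  by (insert SM_unfolded; elim conjE; blast)+

lemma cmp_arr[simp]: "f \<in> Ar \<Longrightarrow> g \<in> Ar \<Longrightarrow> Cd f = Dm g \<Longrightarrow> g \<cdot> f \<in> Ar"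
  and cmp_dm[simp]: "f \<in> Ar \<Longrightarrow> g \<in> Ar \<Longrightarrow> Cd f = Dm g \<Longrightarrow> Dm (g \<cdot> f) = Dm f"
  and cmp_cd[simp]: "f \<in> Ar \<Longrightarrow> g \<in> Ar \<Longrightarrow> Cd f = Dm g \<Longrightarrow> Cd (g \<cdot> f) = Cd g"
  and tar_arr[simp]: "f \<in> Ar \<Longrightarrow> g \<in> Ar \<Longrightarrow> f \<otimes> g \<in> Ar"
  and tar_dm[simp]: "f \<in> Ar \<Longrightarrow> g \<in> Ar \<Longrightarrow> Dm (f \<otimes> g) = Dm f \<odot> Dm g"
  and tar_cd[simp]: "f \<in> Ar \<Longrightarrow> g \<in> Ar \<Longrightarrow> Cd (f \<otimes> g) = Cd f \<odot> Cd g"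
  by (insert SM_unfolded; elim conjE; blast)+

lemma cmp_idr[simp]: "f \<in> Ar \<Longrightarrow> X = Dm f \<Longrightarrow> f \<cdot> I X = f"
  and cmp_idl[simp]: "f \<in> Ar \<Longrightarrow> X = Cd f \<Longrightarrow> I X \<cdot> f = f"
  and tar_id[simp]: "X \<in> Ob \<Longrightarrow> Y \<in> Ob \<Longrightarrow> I X \<otimes> I Y = I (X \<odot> Y)"
  by (insert SM_unfolded; elim conjE; blast)+

lemma assoc[simp]: "f \<in> Ar \<Longrightarrow> g \<in> Ar \<Longrightarrow> h \<in> Ar \<Longrightarrow> Cd f = Dm g \<Longrightarrow> Cd g = Dm h \<Longrightarrow>
  (h \<cdot> g) \<cdot> f = h \<cdot> (g \<cdot> f)"
  by (insert SM_unfolded; elim conjE; metis)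

lemma interchange: "f \<in> Ar \<Longrightarrow> g \<in> Ar \<Longrightarrow> f' \<in> Ar \<Longrightarrow> g' \<in> Ar \<Longrightarrow> Cd f = Dm g \<Longrightarrow> Cd f' = Dm g' \<Longrightarrow>
   (g \<cdot> f) \<otimes> (g' \<cdot> f') = (g \<otimes> g') \<cdot> (f \<otimes> f')"
  by (insert SM_unfolded; elim conjE; blast)

lemma tob_assoc[simp]: "X \<in> Ob \<Longrightarrow> Y \<in> Ob \<Longrightarrow> Z \<in> Ob \<Longrightarrow> (X \<odot> Y) \<odot> Z = X \<odot> (Y \<odot> Z)"
  and tob_unit[simp]: "X \<in> Ob \<Longrightarrow> U \<odot> X = X" "X \<in> Ob \<Longrightarrow> X \<odot> U = X"
  and tar_assoc[simp]: "f \<in> Ar \<Longrightarrow> g \<in> Ar \<Longrightarrow> h \<in> Ar \<Longrightarrow> (f \<otimes> g) \<otimes> h = f \<otimes> (g \<otimes> h)"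
  and tar_unit[simp]: "f \<in> Ar \<Longrightarrow> I U \<otimes> f = f" "f \<in> Ar \<Longrightarrow> f \<otimes> I U = f"
  by (insert SM_unfolded; elim conjE; metis)+

lemmas BM_unfolded = BM[unfolded bimonad_def hom_def mem_Collect_eq]

lemma T_arr[simp]: "f \<in> Ar \<Longrightarrow> T f \<in> Ar"
  and T_dm[simp]: "f \<in> Ar \<Longrightarrow> Dm (T f) = TO (Dm f)"
  and T_cd[simp]: "f \<in> Ar \<Longrightarrow> Cd (T f) = TO (Cd f)"
  and ob_T[simp]: "X \<in> Ob \<Longrightarrow> TO X \<in> Ob"
  and T_id[simp]: "X \<in> Ob \<Longrightarrow> T (I X) = I (TO X)"
  by (insert BM_unfolded; elim conjE; blast)+

lemma T_cmp: "f \<in> Ar \<Longrightarrow> g \<in> Ar \<Longrightarrow> Cd f = Dm g \<Longrightarrow> T (g \<cdot> f) = T g \<cdot> T f"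
  by (insert BM_unfolded; elim conjE; blast)

lemma M_arr[simp]: "X \<in> Ob \<Longrightarrow> M X \<in> Ar"
  and M_dm[simp]: "X \<in> Ob \<Longrightarrow> Dm (M X) = TO (TO X)"
  and M_cd[simp]: "X \<in> Ob \<Longrightarrow> Cd (M X) = TO X"
  and E_arr[simp]: "X \<in> Ob \<Longrightarrow> E X \<in> Ar"
  and E_dm[simp]: "X \<in> Ob \<Longrightarrow> Dm (E X) = X"
  and E_cd[simp]: "X \<in> Ob \<Longrightarrow> Cd (E X) = TO X"
  by (insert BM_unfolded; elim conjE; blast)+

lemma M_nat: "f \<in> Ar \<Longrightarrow> T f \<cdot> M (Dm f) = M (Cd f) \<cdot> T (T f)"
  and E_nat: "f \<in> Ar \<Longrightarrow> T f \<cdot> E (Dm f) = E (Cd f) \<cdot> f"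
  and M_assoc: "X \<in> Ob \<Longrightarrow> M X \<cdot> T (M X) = M X \<cdot> M (TO X)"
  and M_unit1[simp]: "X \<in> Ob \<Longrightarrow> M X \<cdot> E (TO X) = I (TO X)"
  and M_unit2[simp]: "X \<in> Ob \<Longrightarrow> M X \<cdot> T (E X) = I (TO X)"
  by (insert BM_unfolded; elim conjE; blast)+

lemma T2_arr[simp]: "X \<in> Ob \<Longrightarrow> Y \<in> Ob \<Longrightarrow> T2 X Y \<in> Ar"
  and T2_dm[simp]: "X \<in> Ob \<Longrightarrow> Y \<in> Ob \<Longrightarrow> Dm (T2 X Y) = TO (X \<odot> Y)"
  and T2_cd[simp]: "X \<in> Ob \<Longrightarrow> Y \<in> Ob \<Longrightarrow> Cd (T2 X Y) = TO X \<odot> TO Y"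
  and T0_arr[simp]: "T0 \<in> Ar"
  and T0_dm[simp]: "Dm T0 = TO U"
  and T0_cd[simp]: "Cd T0 = U"
  by (insert BM_unfolded; elim conjE; blast)+

lemma T2_nat: "f \<in> Ar \<Longrightarrow> g \<in> Ar \<Longrightarrow> T2 (Cd f) (Cd g) \<cdot> T (f \<otimes> g) = (T f \<otimes> T g) \<cdot> T2 (Dm f) (Dm g)"
  and T2_coassoc: "X \<in> Ob \<Longrightarrow> Y \<in> Ob \<Longrightarrow> Z \<in> Ob \<Longrightarrow>
    (T2 X Y \<otimes> I (TO Z)) \<cdot> T2 (X \<odot> Y) Z = (I (TO X) \<otimes> T2 Y Z) \<cdot> T2 X (Y \<odot> Z)"
  and T2_counit: "X \<in> Ob \<Longrightarrow> (I (TO X) \<otimes> T0) \<cdot> T2 X U = I (TO X)"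
  by (insert BM_unfolded; elim conjE; blast)+

lemma M_comon: "X \<in> Ob \<Longrightarrow> Y \<in> Ob \<Longrightarrow> T2 X Y \<cdot> M (X \<odot> Y) = (M X \<otimes> M Y) \<cdot> (T2 (TO X) (TO Y) \<cdot> T (T2 X Y))"
  and E_comon: "X \<in> Ob \<Longrightarrow> Y \<in> Ob \<Longrightarrow> T2 X Y \<cdot> E (X \<odot> Y) = E X \<otimes> E Y"
  and M_T0: "T0 \<cdot> M U = T0 \<cdot> T T0"
  and E_T0: "T0 \<cdot> E U = I U"
  by (insert BM_unfolded; elim conjE; blast)+

lemma reassoc: "a \<cdot> b = c \<Longrightarrow> a \<in> Ar \<Longrightarrow> b \<in> Ar \<Longrightarrow> Cd b = Dm a \<Longrightarrow> r \<in> Ar \<Longrightarrow> Cd r = Dm b \<Longrightarrow>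
  a \<cdot> (b \<cdot> r) = c \<cdot> r"
  by (metis assoc)

lemma reassoc2: "a \<cdot> (b \<cdot> c) = d \<Longrightarrow> a \<in> Ar \<Longrightarrow> b \<in> Ar \<Longrightarrow> c \<in> Ar \<Longrightarrow> Cd b = Dm a \<Longrightarrow> Cd c = Dm b \<Longrightarrow>
  r \<in> Ar \<Longrightarrow> Cd r = Dm c \<Longrightarrow> a \<cdot> (b \<cdot> (c \<cdot> r)) = d \<cdot> r"
  by (metis assoc cmp_arr cmp_cd cmp_dm)

lemma id_tensor_comp: "X \<in> Ob \<Longrightarrow> f \<in> Ar \<Longrightarrow> g \<in> Ar \<Longrightarrow> Cd f = Dm g \<Longrightarrow>
  (I X \<otimes> g) \<cdot> (I X \<otimes> f) = I X \<otimes> (g \<cdot> f)"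
  using interchange[of "I X" "I X" f g] by simp

lemma tensor_id_comp: "X \<in> Ob \<Longrightarrow> f \<in> Ar \<Longrightarrow> g \<in> Ar \<Longrightarrow> Cd f = Dm g \<Longrightarrow>
  (g \<otimes> I X) \<cdot> (f \<otimes> I X) = (g \<cdot> f) \<otimes> I X"
  using interchange[of f g "I X" "I X"] by simp

lemma tensor_fst_then_snd:
  assumes "f \<in> Ar" "g \<in> Ar" "P = Cd f" "Q = Dm g"
  shows "(I P \<otimes> g) \<cdot> (f \<otimes> I Q) = f \<otimes> g"
proof -
  have "(I P \<otimes> g) \<cdot> (f \<otimes> I Q) = (I P \<cdot> f) \<otimes> (g \<cdot> I Q)"
    by (rule interchange[symmetric]) (use assms in simp_all)
  then show ?thesis using assms by simp
qed

lemma tensor_snd_then_fst: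
  assumes "f \<in> Ar" "g \<in> Ar" "P = Dm f" "Q = Cd g"
  shows "(f \<otimes> I Q) \<cdot> (I P \<otimes> g) = f \<otimes> g"
proof -
  have "(f \<otimes> I Q) \<cdot> (I P \<otimes> g) = (f \<cdot> I P) \<otimes> (I Q \<cdot> g)"
    by (rule interchange[symmetric]) (use assms in simp_all)
  then show ?thesis using assms by simp
qed

lemma tensor_slide:
  assumes "f \<in> Ar" "g \<in> Ar"
  shows "(I (Cd f) \<otimes> g) \<cdot> (f \<otimes> I (Dm g)) = (f \<otimes> I (Cd g)) \<cdot> (I (Dm f) \<otimes> g)"
  using tensor_fst_then_snd[OF assms refl refl] tensor_snd_then_fst[OF assms refl refl] by simp

lemma closed_at:
  "X \<in> Ob \<Longrightarrow> Y \<in> Ob \<Longrightarrow> IH X Y \<in> Ob \<and> ev X Y \<in> {f \<in> Ar. Dm f = IH X Y \<odot> X \<and> Cd f = Y} \<and>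
     (\<forall>Z\<in>Ob. \<forall>f\<in>{f \<in> Ar. Dm f = Z \<odot> X \<and> Cd f = Y}.
        \<exists>!g. g \<in> {g \<in> Ar. Dm g = Z \<and> Cd g = IH X Y} \<and> ev X Y \<cdot> (g \<otimes> I X) = f)"
  by (rule LC[unfolded left_closed_def hom_def, THEN bspec, THEN bspec])

lemma ob_IH[simp]: "X \<in> Ob \<Longrightarrow> Y \<in> Ob \<Longrightarrow> IH X Y \<in> Ob"
  and ev_arr[simp]: "X \<in> Ob \<Longrightarrow> Y \<in> Ob \<Longrightarrow> ev X Y \<in> Ar"
  and ev_dm[simp]: "X \<in> Ob \<Longrightarrow> Y \<in> Ob \<Longrightarrow> Dm (ev X Y) = IH X Y \<odot> X"
  and ev_cd[simp]: "X \<in> Ob \<Longrightarrow> Y \<in> Ob \<Longrightarrow> Cd (ev X Y) = Y"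
  using closed_at by simp_all

lemma transpose_ex1:
  assumes "X \<in> Ob" "Y \<in> Ob" "Z \<in> Ob" "f \<in> Ar" "Dm f = Z \<odot> X" "Cd f = Y"
  shows "\<exists>!g. (g \<in> Ar \<and> Dm g = Z \<and> Cd g = IH X Y) \<and> ev X Y \<cdot> (g \<otimes> I X) = f"
proof -
  have "\<exists>!g. g \<in> {g \<in> Ar. Dm g = Z \<and> Cd g = IH X Y} \<and> ev X Y \<cdot> (g \<otimes> I X) = f"
    using closed_at[OF assms(1,2)] assms(3-6) by blast
  then show ?thesis by simp
qed

lemma transpose_inj:
  assumes "X \<in> Ob" "Y \<in> Ob" "g \<in> Ar" "g' \<in> Ar" "Dm g = Dm g'" "Cd g = IH X Y" "Cd g' = IH X Y"
    and "ev X Y \<cdot> (g \<otimes> I X) = ev X Y \<cdot> (g' \<otimes> I X)"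
  shows "g = g'"
proof -
  have "\<exists>!h. (h \<in> Ar \<and> Dm h = Dm g \<and> Cd h = IH X Y) \<and> ev X Y \<cdot> (h \<otimes> I X) = ev X Y \<cdot> (g \<otimes> I X)"
    by (rule transpose_ex1) (use assms in auto)
  then show ?thesis using assms by metis
qed

lemma hm_prop:
  assumes "f \<in> Ar" "g \<in> Ar"
  shows "hm f g \<in> Ar \<and> Dm (hm f g) = IH (Cd f) (Dm g) \<and> Cd (hm f g) = IH (Dm f) (Cd g) \<and>
     ev (Dm f) (Cd g) \<cdot> (hm f g \<otimes> I (Dm f)) = g \<cdot> (ev (Cd f) (Dm g) \<cdot> (I (IH (Cd f) (Dm g)) \<otimes> f))"
proof -
  have "\<exists>!h. (h \<in> Ar \<and> Dm h = IH (Cd f) (Dm g) \<and> Cd h = IH (Dm f) (Cd g)) \<and>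
      ev (Dm f) (Cd g) \<cdot> (h \<otimes> I (Dm f)) = g \<cdot> (ev (Cd f) (Dm g) \<cdot> (I (IH (Cd f) (Dm g)) \<otimes> f))"
    by (rule transpose_ex1) (use assms in auto)
  from theI'[OF this] show ?thesis
    unfolding ihmor_def hom_def mem_Collect_eq by blast
qed

lemma hm_arr[simp]: "f \<in> Ar \<Longrightarrow> g \<in> Ar \<Longrightarrow> hm f g \<in> Ar"
  and hm_dm[simp]: "f \<in> Ar \<Longrightarrow> g \<in> Ar \<Longrightarrow> Dm (hm f g) = IH (Cd f) (Dm g)"
  and hm_cd[simp]: "f \<in> Ar \<Longrightarrow> g \<in> Ar \<Longrightarrow> Cd (hm f g) = IH (Dm f) (Cd g)"
  using hm_prop by blast+

lemma hm_ev_at: "f \<in> Ar \<Longrightarrow> g \<in> Ar \<Longrightarrow> Dm f = X \<Longrightarrow> Cd g = Y \<Longrightarrow>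
  ev X Y \<cdot> (hm f g \<otimes> I X) = g \<cdot> (ev (Cd f) (Dm g) \<cdot> (I (IH (Cd f) (Dm g)) \<otimes> f))"
  using hm_prop by blast

lemma coev_prop:
  assumes "X \<in> Ob" "Y \<in> Ob"
  shows "cv X Y \<in> Ar \<and> Dm (cv X Y) = Y \<and> Cd (cv X Y) = IH X (Y \<odot> X) \<and>
    ev X (Y \<odot> X) \<cdot> (cv X Y \<otimes> I X) = I (Y \<odot> X)"
proof -
  have "\<exists>!h. (h \<in> Ar \<and> Dm h = Y \<and> Cd h = IH X (Y \<odot> X)) \<and> ev X (Y \<odot> X) \<cdot> (h \<otimes> I X) = I (Y \<odot> X)"
    by (rule transpose_ex1) (use assms in auto)
  from theI'[OF this] show ?thesis
    unfolding coev_def hom_def mem_Collect_eq by blast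
qed

lemma coev_arr[simp]: "X \<in> Ob \<Longrightarrow> Y \<in> Ob \<Longrightarrow> cv X Y \<in> Ar"
  and coev_dm[simp]: "X \<in> Ob \<Longrightarrow> Y \<in> Ob \<Longrightarrow> Dm (cv X Y) = Y"
  and coev_cd[simp]: "X \<in> Ob \<Longrightarrow> Y \<in> Ob \<Longrightarrow> Cd (cv X Y) = IH X (Y \<odot> X)"
  using coev_prop by blast+

lemma coev_ev_at: "X \<in> Ob \<Longrightarrow> Y \<in> Ob \<Longrightarrow> Z = Y \<odot> X \<Longrightarrow> ev X Z \<cdot> (cv X Y \<otimes> I X) = I Z"
  using coev_prop by blast

lemmas ev_rules = hm_ev_at reassoc[OF hm_ev_at] coev_ev_at reassoc[OF coev_ev_at]

lemma transpose_comp: "X \<in> Ob \<Longrightarrow> Y \<in> Ob \<Longrightarrow> g \<in> Ar \<Longrightarrow> k \<in> Ar \<Longrightarrow> Cd k = Dm g \<Longrightarrow> Cd g = IH X Y \<Longrightarrow>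
   ev X Y \<cdot> ((g \<cdot> k) \<otimes> I X) = ev X Y \<cdot> ((g \<otimes> I X) \<cdot> (k \<otimes> I X))"
  using interchange[of k g "I X" "I X"] by simp

lemma transpose_hm:
  assumes a: "f \<in> Ar" "h \<in> Ar" "g \<in> Ar" "Cd g = IH (Cd f) (Dm h)" and XY: "Dm f = X" "Cd h = Y"
  shows "ev X Y \<cdot> ((hm f h \<cdot> g) \<otimes> I X) = h \<cdot> (ev (Cd f) (Dm h) \<cdot> ((g \<otimes> I (Cd f)) \<cdot> (I (Dm g) \<otimes> f)))"
proof -
  have "ev X Y \<cdot> ((hm f h \<cdot> g) \<otimes> I X) = ev X Y \<cdot> ((hm f h \<otimes> I X) \<cdot> (g \<otimes> I X))"
    using a XY[symmetric] by (simp add: transpose_comp)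
  also have "\<dots> = h \<cdot> (ev (Cd f) (Dm h) \<cdot> ((I (IH (Cd f) (Dm h)) \<otimes> f) \<cdot> (g \<otimes> I (Dm f))))"
    using a XY[symmetric] by (simp add: reassoc[OF hm_ev_at])
  also have "(I (IH (Cd f) (Dm h)) \<otimes> f) \<cdot> (g \<otimes> I (Dm f)) = g \<otimes> f"
    using a tensor_fst_then_snd[of g f] by simp
  also have "g \<otimes> f = (g \<otimes> I (Cd f)) \<cdot> (I (Dm g) \<otimes> f)"
    using a tensor_snd_then_fst[of g f] by simp
  finally show ?thesis .
qed

lemma hm_id[simp]: "X \<in> Ob \<Longrightarrow> Y \<in> Ob \<Longrightarrow> hm (I X) (I Y) = I (IH X Y)"
  by (rule transpose_inj[of X Y]) (simp_all add: hm_ev_at)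

lemma hm_comp:
  assumes a: "f \<in> Ar" "f' \<in> Ar" "h \<in> Ar" "h' \<in> Ar" "Cd f = Dm f'" "Cd h' = Dm h"
  shows "hm f h \<cdot> hm f' h' = hm (f' \<cdot> f) (h \<cdot> h')"
proof (rule transpose_inj[of "Dm f" "Cd h"])
  have "ev (Dm f) (Cd h) \<cdot> ((hm f h \<cdot> hm f' h') \<otimes> I (Dm f)) =
     h \<cdot> (ev (Cd f) (Dm h) \<cdot> ((hm f' h' \<otimes> I (Cd f)) \<cdot> (I (Dm (hm f' h')) \<otimes> f)))"
    using a by (simp add: transpose_hm)
  also have "\<dots> = h \<cdot> (h' \<cdot> (ev (Cd f') (Dm h') \<cdot> ((I (IH (Cd f') (Dm h')) \<otimes> f') \<cdot> (I (IH (Cd f') (Dm h')) \<otimes> f))))"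
    using a by (simp add: reassoc[OF hm_ev_at])
  also have "\<dots> = (h \<cdot> h') \<cdot> (ev (Cd f') (Dm h') \<cdot> (I (IH (Cd f') (Dm h')) \<otimes> (f' \<cdot> f)))"
    using a by (simp add: id_tensor_comp)
  also have "\<dots> = ev (Dm f) (Cd h) \<cdot> (hm (f' \<cdot> f) (h \<cdot> h') \<otimes> I (Dm f))"
    using a by (simp add: hm_ev_at)
  finally show "ev (Dm f) (Cd h) \<cdot> ((hm f h \<cdot> hm f' h') \<otimes> I (Dm f)) =
      ev (Dm f) (Cd h) \<cdot> (hm (f' \<cdot> f) (h \<cdot> h') \<otimes> I (Dm f))" .
qed (use a in simp_all)

lemma triangle:
  assumes "X \<in> Ob" "Y \<in> Ob"
  shows "hm (I X) (ev X Y) \<cdot> cv X (IH X Y) = I (IH X Y)"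
proof (rule transpose_inj[of X Y])
  show "ev X Y \<cdot> ((hm (I X) (ev X Y) \<cdot> cv X (IH X Y)) \<otimes> I X) = ev X Y \<cdot> (I (IH X Y) \<otimes> I X)"
    using assms by (simp add: transpose_hm ev_rules)
qed (use assms in simp_all)

lemma transpose_coev: "X \<in> Ob \<Longrightarrow> h \<in> Ar \<Longrightarrow> k \<in> Ar \<Longrightarrow> Dm h = Cd k \<odot> X \<Longrightarrow>
   ev X (Cd h) \<cdot> ((hm (I X) h \<cdot> (cv X (Cd k) \<cdot> k)) \<otimes> I X) = h \<cdot> (k \<otimes> I X)"
  by (simp add: transpose_hm) (simp add: transpose_comp ev_rules)

abbreviation cur where "cur X Y Z \<equiv> curry_iso C L X Y Z"

lemma cur_prop: assumes X: "X \<in> Ob" and Y: "Y \<in> Ob" and Z: "Z \<in> Ob"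
  shows "cur X Y Z \<in> Ar \<and> Dm (cur X Y Z) = IH (X \<odot> Y) Z \<and> Cd (cur X Y Z) = IH X (IH Y Z) \<and>
    ev Y Z \<cdot> ((ev X (IH Y Z) \<cdot> (cur X Y Z \<otimes> I X)) \<otimes> I Y) = ev (X \<odot> Y) Z"
proof -
  define k where "k = (THE k. k \<in> hom C (IH (X \<odot> Y) Z \<odot> X) (IH Y Z) \<and> ev Y Z \<cdot> (k \<otimes> I Y) = ev (X \<odot> Y) Z)"
  have k_ex: "\<exists>!k. (k \<in> Ar \<and> Dm k = IH (X \<odot> Y) Z \<odot> X \<and> Cd k = IH Y Z) \<and> ev Y Z \<cdot> (k \<otimes> I Y) = ev (X \<odot> Y) Z"
    by (rule transpose_ex1) (use X Y Z in simp_all)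
  have k_prop: "(k \<in> Ar \<and> Dm k = IH (X \<odot> Y) Z \<odot> X \<and> Cd k = IH Y Z) \<and> ev Y Z \<cdot> (k \<otimes> I Y) = ev (X \<odot> Y) Z"
    unfolding k_def hom_def mem_Collect_eq by (rule theI'[OF k_ex])
  have cur_ex: "\<exists>!h. (h \<in> Ar \<and> Dm h = IH (X \<odot> Y) Z \<and> Cd h = IH X (IH Y Z)) \<and> ev X (IH Y Z) \<cdot> (h \<otimes> I X) = k"
    by (rule transpose_ex1) (use X Y Z k_prop in simp_all)
  have "cur X Y Z = (THE h. (h \<in> Ar \<and> Dm h = IH (X \<odot> Y) Z \<and> Cd h = IH X (IH Y Z)) \<and> ev X (IH Y Z) \<cdot> (h \<otimes> I X) = k)"
    unfolding curry_iso_def Let_def k_def hom_def mem_Collect_eq by simp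
  then have "(cur X Y Z \<in> Ar \<and> Dm (cur X Y Z) = IH (X \<odot> Y) Z \<and> Cd (cur X Y Z) = IH X (IH Y Z)) \<and> ev X (IH Y Z) \<cdot> (cur X Y Z \<otimes> I X) = k"
    using theI'[OF cur_ex] by simp
  then show ?thesis using k_prop by simp
qed

lemma cur_arr[simp]: "X \<in> Ob \<Longrightarrow> Y \<in> Ob \<Longrightarrow> Z \<in> Ob \<Longrightarrow> cur X Y Z \<in> Ar"
  and cur_dm[simp]: "X \<in> Ob \<Longrightarrow> Y \<in> Ob \<Longrightarrow> Z \<in> Ob \<Longrightarrow> Dm (cur X Y Z) = IH (X \<odot> Y) Z"
  and cur_cd[simp]: "X \<in> Ob \<Longrightarrow> Y \<in> Ob \<Longrightarrow> Z \<in> Ob \<Longrightarrow> Cd (cur X Y Z) = IH X (IH Y Z)"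
  and cur_ev: "X \<in> Ob \<Longrightarrow> Y \<in> Ob \<Longrightarrow> Z \<in> Ob \<Longrightarrow> ev Y Z \<cdot> ((ev X (IH Y Z) \<cdot> (cur X Y Z \<otimes> I X)) \<otimes> I Y) = ev (X \<odot> Y) Z"
  using cur_prop by blast+

lemma cur_mate: assumes X: "X \<in> Ob" and Y: "Y \<in> Ob" and Z: "Z \<in> Ob" and g: "g \<in> Ar" "Cd g = IH (X \<odot> Y) Z"
  shows "ev Y Z \<cdot> ((ev X (IH Y Z) \<cdot> ((cur X Y Z \<cdot> g) \<otimes> I X)) \<otimes> I Y) = ev (X \<odot> Y) Z \<cdot> (g \<otimes> I (X \<odot> Y))"
proof -
  let ?k = "ev X (IH Y Z) \<cdot> (cur X Y Z \<otimes> I X)"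
  have transpose_X: "ev X (IH Y Z) \<cdot> ((cur X Y Z \<cdot> g) \<otimes> I X) = ?k \<cdot> (g \<otimes> I X)"
    using X Y Z g by (simp add: transpose_comp)
  have split_Y: "(?k \<cdot> (g \<otimes> I X)) \<otimes> I Y = (?k \<otimes> I Y) \<cdot> (g \<otimes> I (X \<odot> Y))"
  proof -
    have "(?k \<cdot> (g \<otimes> I X)) \<otimes> I Y = (?k \<otimes> I Y) \<cdot> ((g \<otimes> I X) \<otimes> I Y)"
      using X Y Z g tensor_id_comp[of Y "g \<otimes> I X" ?k] by simp
    then show ?thesis using X Y Z g by simp
  qed
  have cur_double: "ev Y Z \<cdot> (?k \<otimes> I Y) = ev (X \<odot> Y) Z" using cur_ev X Y Z by blast
  show ?thesis unfolding transpose_X split_Y using X Y Z g by (simp add: reassoc[OF cur_double])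
qed

lemma transpose2_inj: assumes X: "X \<in> Ob" and Y: "Y \<in> Ob" and V: "V \<in> Ob" and g: "g \<in> Ar" "g' \<in> Ar" "Dm g = Dm g'"
  "Cd g = IH X (IH Y V)" "Cd g' = IH X (IH Y V)"
  and e: "ev Y V \<cdot> ((ev X (IH Y V) \<cdot> (g \<otimes> I X)) \<otimes> I Y) = ev Y V \<cdot> ((ev X (IH Y V) \<cdot> (g' \<otimes> I X)) \<otimes> I Y)"
  shows "g = g'"
proof -
  have inner: "ev X (IH Y V) \<cdot> (g \<otimes> I X) = ev X (IH Y V) \<cdot> (g' \<otimes> I X)"
    by (rule transpose_inj[OF Y V _ _ _ _ _ e]) (use X Y V g in simp_all)
  show ?thesis by (rule transpose_inj[OF X _ _ _ _ _ _ inner]) (use X Y V g in simp_all)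
qed

abbreviation H where "H Y X \<equiv> (I (TO Y) \<otimes> M X) \<cdot> T2 Y (TO X)"

lemma H_nat: assumes f: "f \<in> Ar" and X: "X \<in> Ob"
  shows "H (Cd f) X \<cdot> T (f \<otimes> I (TO X)) = (T f \<otimes> I (TO X)) \<cdot> H (Dm f) X"
proof -
  have "H (Cd f) X \<cdot> T (f \<otimes> I (TO X)) = (I (TO (Cd f)) \<otimes> M X) \<cdot> (T f \<otimes> I (TO (TO X))) \<cdot> T2 (Dm f) (TO X)"
    using f X T2_nat[of f "I (TO X)"] by simp
  also have "\<dots> = (T f \<otimes> I (TO X)) \<cdot> (I (TO (Dm f)) \<otimes> M X) \<cdot> T2 (Dm f) (TO X)"
  proof -
    have e: "(I (TO (Cd f)) \<otimes> M X) \<cdot> (T f \<otimes> I (TO (TO X))) = (T f \<otimes> I (TO X)) \<cdot> (I (TO (Dm f)) \<otimes> M X)"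
      using f X tensor_fst_then_snd[of "T f" "M X"] tensor_snd_then_fst[of "T f" "M X"] by simp
    show ?thesis using f X by (simp add: reassoc[OF e])
  qed
  finally show ?thesis .
qed

lemma H_mu: assumes A: "A \<in> Ob" and X: "X \<in> Ob"
  shows "H A X \<cdot> M (A \<odot> TO X) = (M A \<otimes> I (TO X)) \<cdot> H (TO A) X \<cdot> T (H A X)"
proof -
  have "H A X \<cdot> M (A \<odot> TO X) = (I (TO A) \<otimes> M X) \<cdot> (M A \<otimes> M (TO X)) \<cdot> T2 (TO A) (TO (TO X)) \<cdot> T (T2 A (TO X))"
    using A X by (simp add: M_comon)
  also have "\<dots> = (M A \<otimes> (M X \<cdot> M (TO X))) \<cdot> T2 (TO A) (TO (TO X)) \<cdot> T (T2 A (TO X))"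
    using A X interchange[of "M A" "I (TO A)" "M (TO X)" "M X"] by simp
  also have "\<dots> = (M A \<otimes> (M X \<cdot> T (M X))) \<cdot> T2 (TO A) (TO (TO X)) \<cdot> T (T2 A (TO X))"
    using A X by (simp add: M_assoc)
  also have "\<dots> = (M A \<otimes> M X) \<cdot> (I (TO (TO A)) \<otimes> T (M X)) \<cdot> T2 (TO A) (TO (TO X)) \<cdot> T (T2 A (TO X))"
    using A X interchange[of "I (TO (TO A))" "M A" "T (M X)" "M X"] by simp
  also have "\<dots> = (M A \<otimes> M X) \<cdot> T2 (TO A) (TO X) \<cdot> T (I (TO A) \<otimes> M X) \<cdot> T (T2 A (TO X))"
  proof -
    have n: "T2 (TO A) (TO X) \<cdot> T (I (TO A) \<otimes> M X) = (I (TO (TO A)) \<otimes> T (M X)) \<cdot> T2 (TO A) (TO (TO X))"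
      using A X T2_nat[of "I (TO A)" "M X"] by simp
    show ?thesis using A X by (simp add: reassoc[OF n])
  qed
  also have "\<dots> = (M A \<otimes> I (TO X)) \<cdot> H (TO A) X \<cdot> T (H A X)"
  proof -
    have m: "(M A \<otimes> I (TO X)) \<cdot> (I (TO (TO A)) \<otimes> M X) = M A \<otimes> M X" using A X by (simp add: tensor_snd_then_fst)
    have t: "T ((I (TO A) \<otimes> M X) \<cdot> T2 A (TO X)) = T (I (TO A) \<otimes> M X) \<cdot> T (T2 A (TO X))" using A X by (simp add: T_cmp)
    show ?thesis using A X by (simp add: reassoc[OF m] t)
  qed
  finally show ?thesis .
qed

lemma H_counit: assumes Q: "Q \<in> Ob" shows "(I (TO Q) \<otimes> T0) \<cdot> H Q U = T (I Q \<otimes> T0)"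
proof -
  have "(I (TO Q) \<otimes> T0) \<cdot> H Q U = (I (TO Q) \<otimes> (T0 \<cdot> M U)) \<cdot> T2 Q (TO U)"
    using Q by (simp add: reassoc[OF id_tensor_comp])
  also have "\<dots> = (I (TO Q) \<otimes> (T0 \<cdot> T T0)) \<cdot> T2 Q (TO U)"
    using Q by (simp add: M_T0)
  also have "\<dots> = (I (TO Q) \<otimes> T0) \<cdot> (I (TO Q) \<otimes> T T0) \<cdot> T2 Q (TO U)"
    using Q by (simp add: reassoc[OF id_tensor_comp])
  also have "\<dots> = (I (TO Q) \<otimes> T0) \<cdot> T2 Q U \<cdot> T (I Q \<otimes> T0)"
    using Q T2_nat[of "I Q" T0] by simp
  also have "\<dots> = T (I Q \<otimes> T0)"
    using Q by (simp add: reassoc[OF T2_counit])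
  finally show ?thesis .
qed

text \<open>Compatibility of H with the comultiplication T_2 (coassociativity of T_2 and comonoidality of \<mu>).\<close>

lemma H_tensor: assumes A: "A \<in> Ob" and X: "X \<in> Ob" and Y: "Y \<in> Ob"
  shows "(I (TO A) \<otimes> (M X \<otimes> I (TO Y))) \<cdot> (T2 A (TO X) \<otimes> I (TO Y)) \<cdot> (I (TO (A \<odot> TO X)) \<otimes> M Y) \<cdot>
          T2 (A \<odot> TO X) (TO Y) \<cdot> T (I A \<otimes> T2 X Y) =
         (I (TO A) \<otimes> T2 X Y) \<cdot> (I (TO A) \<otimes> M (X \<odot> Y)) \<cdot> T2 A (TO (X \<odot> Y))"
proof -
  have slide_mu: "(T2 A (TO X) \<otimes> I (TO Y)) \<cdot> (I (TO (A \<odot> TO X)) \<otimes> M Y) =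
     (I (TO A \<odot> TO (TO X)) \<otimes> M Y) \<cdot> (T2 A (TO X) \<otimes> I (TO (TO Y)))"
  proof -
    have "(T2 A (TO X) \<otimes> I (TO Y)) \<cdot> (I (TO (A \<odot> TO X)) \<otimes> M Y) = T2 A (TO X) \<otimes> M Y"
      using A X Y tensor_snd_then_fst[of "T2 A (TO X)" "M Y"] by simp
    moreover have "(I (TO A \<odot> TO (TO X)) \<otimes> M Y) \<cdot> (T2 A (TO X) \<otimes> I (TO (TO Y))) = T2 A (TO X) \<otimes> M Y"
      using A X Y tensor_fst_then_snd[of "T2 A (TO X)" "M Y"] by simp
    ultimately show ?thesis by simp
  qed
  have coassoc: "(T2 A (TO X) \<otimes> I (TO (TO Y))) \<cdot> T2 (A \<odot> TO X) (TO Y) = (I (TO A) \<otimes> T2 (TO X) (TO Y)) \<cdot> T2 A (TO X \<odot> TO Y)"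
    using A X Y T2_coassoc[of A "TO X" "TO Y"] by simp
  have T2_natural: "T2 A (TO X \<odot> TO Y) \<cdot> T (I A \<otimes> T2 X Y) = (I (TO A) \<otimes> T (T2 X Y)) \<cdot> T2 A (TO (X \<odot> Y))"
    using A X Y T2_nat[of "I A" "T2 X Y"] by simp
  have mu_merge: "(I (TO A) \<otimes> (M X \<otimes> I (TO Y))) \<cdot> (I (TO A \<odot> TO (TO X)) \<otimes> M Y) = I (TO A) \<otimes> (M X \<otimes> M Y)"
  proof -
    have id_assoc: "I (TO A \<odot> TO (TO X)) \<otimes> M Y = I (TO A) \<otimes> (I (TO (TO X)) \<otimes> M Y)"
      using tar_assoc[of "I (TO A)" "I (TO (TO X))" "M Y"] A X Y by simp
    have mu_tensor: "(M X \<otimes> I (TO Y)) \<cdot> (I (TO (TO X)) \<otimes> M Y) = M X \<otimes> M Y"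
      using A X Y tensor_snd_then_fst[of "M X" "M Y"] by simp
    show ?thesis unfolding id_assoc using A X Y by (simp add: id_tensor_comp mu_tensor)
  qed
  have mu_comon: "(I (TO A) \<otimes> (M X \<otimes> M Y)) \<cdot> (I (TO A) \<otimes> T2 (TO X) (TO Y)) \<cdot> (I (TO A) \<otimes> T (T2 X Y)) =
     (I (TO A) \<otimes> T2 X Y) \<cdot> (I (TO A) \<otimes> M (X \<odot> Y))"
  proof -
    have "(I (TO A) \<otimes> (M X \<otimes> M Y)) \<cdot> (I (TO A) \<otimes> T2 (TO X) (TO Y)) \<cdot> (I (TO A) \<otimes> T (T2 X Y)) =
       I (TO A) \<otimes> ((M X \<otimes> M Y) \<cdot> T2 (TO X) (TO Y) \<cdot> T (T2 X Y))"
      using A X Y by (simp add: id_tensor_comp reassoc[OF id_tensor_comp])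
    also have "\<dots> = I (TO A) \<otimes> (T2 X Y \<cdot> M (X \<odot> Y))" using A X Y by (simp add: M_comon)
    also have "\<dots> = (I (TO A) \<otimes> T2 X Y) \<cdot> (I (TO A) \<otimes> M (X \<odot> Y))" using A X Y by (simp add: id_tensor_comp)
    finally show ?thesis .
  qed
  show ?thesis using A X Y
    by (simp add: reassoc[OF slide_mu] reassoc[OF coassoc] T2_natural reassoc[OF mu_merge] reassoc2[OF mu_comon])
qed

end

locale left_antipode_ctx = closed_bimonad +
  fixes s assumes LA: "left_antipode C L B s"
begin

lemmas LA_unfolded = LA[unfolded left_antipode_def hom_def mem_Collect_eq]

lemma s_arr[simp]: "X \<in> Ob \<Longrightarrow> Y \<in> Ob \<Longrightarrow> s X Y \<in> Ar"
  and s_dm[simp]: "X \<in> Ob \<Longrightarrow> Y \<in> Ob \<Longrightarrow> Dm (s X Y) = TO (IH (TO X) Y)"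
  and s_cd[simp]: "X \<in> Ob \<Longrightarrow> Y \<in> Ob \<Longrightarrow> Cd (s X Y) = IH X (TO Y)"
  and s_nat: "f \<in> Ar \<Longrightarrow> g \<in> Ar \<Longrightarrow> hm f (T g) \<cdot> s (Cd f) (Dm g) = s (Dm f) (Cd g) \<cdot> T (hm (T f) g)"
  and antipode_ax1: "X \<in> Ob \<Longrightarrow> Y \<in> Ob \<Longrightarrow> T (ev X Y \<cdot> (hm (E X) (I Y) \<otimes> I X)) =
       ev (TO X) (TO Y) \<cdot> ((s (TO X) Y \<cdot> T (hm (M X) (I Y))) \<otimes> I (TO X)) \<cdot> T2 (IH (TO X) Y) X"
  and antipode_ax2: "X \<in> Ob \<Longrightarrow> Y \<in> Ob \<Longrightarrow> hm (I X) (I (TO Y) \<otimes> E X) \<cdot> cv X (TO Y) =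
       hm (I X) (H Y X) \<cdot> (s X (Y \<odot> TO X) \<cdot> T (cv (TO X) Y))"
  by (insert LA_unfolded; elim conjE; blast)+

definition sigma where "sigma X Y = ev X (TO Y) \<cdot> (s X Y \<otimes> I X)"
lemma sigma_arr[simp]: "X \<in> Ob \<Longrightarrow> Y \<in> Ob \<Longrightarrow> sigma X Y \<in> Ar"
  and sigma_dm[simp]: "X \<in> Ob \<Longrightarrow> Y \<in> Ob \<Longrightarrow> Dm (sigma X Y) = TO (IH (TO X) Y) \<odot> X"
  and sigma_cd[simp]: "X \<in> Ob \<Longrightarrow> Y \<in> Ob \<Longrightarrow> Cd (sigma X Y) = TO Y" unfolding sigma_def by simp_all
lemma sigma_fold: "ev X Z \<cdot> (s X Y \<otimes> I X) = sigma X Y" if "Z = TO Y" using that sigma_def by simp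
lemmas sigma_folds = sigma_fold reassoc[OF sigma_fold]

lemma sigma_comp: "X \<in> Ob \<Longrightarrow> Y \<in> Ob \<Longrightarrow> k \<in> Ar \<Longrightarrow> Cd k = TO (IH (TO X) Y) \<Longrightarrow>
  ev X (TO Y) \<cdot> ((s X Y \<cdot> k) \<otimes> I X) = sigma X Y \<cdot> (k \<otimes> I X)"
  by (simp add: transpose_comp sigma_folds)
lemmas sigma_comps = sigma_comp reassoc[OF sigma_comp]

lemma sigma_nat_target: "X \<in> Ob \<Longrightarrow> g \<in> Ar \<Longrightarrow> T g \<cdot> sigma X (Dm g) = sigma X (Cd g) \<cdot> (T (hm (I (TO X)) g) \<otimes> I X)"
proof -
  assume a: "X \<in> Ob" "g \<in> Ar"
  have e: "hm (I X) (T g) \<cdot> s X (Dm g) = s X (Cd g) \<cdot> T (hm (I (TO X)) g)"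
    using s_nat[of "I X" g] a by simp
  have "T g \<cdot> sigma X (Dm g) = ev X (TO (Cd g)) \<cdot> ((hm (I X) (T g) \<cdot> s X (Dm g)) \<otimes> I X)"
    using a by (simp add: transpose_hm sigma_folds)
  also have "\<dots> = sigma X (Cd g) \<cdot> (T (hm (I (TO X)) g) \<otimes> I X)"
    unfolding e using a by (simp add: sigma_comp)
  finally show ?thesis .
qed

lemma sigma_nat_source: "f \<in> Ar \<Longrightarrow> Y \<in> Ob \<Longrightarrow> sigma (Cd f) Y \<cdot> (I (TO (IH (TO (Cd f)) Y)) \<otimes> f) = sigma (Dm f) Y \<cdot> (T (hm (T f) (I Y)) \<otimes> I (Dm f))"
proof -
  assume a: "f \<in> Ar" "Y \<in> Ob"
  have e: "hm f (I (TO Y)) \<cdot> s (Cd f) Y = s (Dm f) Y \<cdot> T (hm (T f) (I Y))"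
    using s_nat[of f "I Y"] a by simp
  have "sigma (Cd f) Y \<cdot> (I (TO (IH (TO (Cd f)) Y)) \<otimes> f) = ev (Dm f) (TO Y) \<cdot> ((hm f (I (TO Y)) \<cdot> s (Cd f) Y) \<otimes> I (Dm f))"
    using a by (simp add: transpose_hm sigma_folds)
  also have "\<dots> = sigma (Dm f) Y \<cdot> (T (hm (T f) (I Y)) \<otimes> I (Dm f))"
    unfolding e using a by (simp add: sigma_comp)
  finally show ?thesis .
qed

lemma sigma_ax1: "X \<in> Ob \<Longrightarrow> Y \<in> Ob \<Longrightarrow> T (ev X Y \<cdot> (hm (E X) (I Y) \<otimes> I X)) =
       sigma (TO X) Y \<cdot> ((T (hm (M X) (I Y)) \<otimes> I (TO X)) \<cdot> T2 (IH (TO X) Y) X)"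
  by (simp add: antipode_ax1 sigma_comps)

lemma sigma_ax2: "X \<in> Ob \<Longrightarrow> Y \<in> Ob \<Longrightarrow> H Y X \<cdot> (sigma X (Y \<odot> TO X) \<cdot> (T (cv (TO X) Y) \<otimes> I X)) = I (TO Y) \<otimes> E X"
proof -
  assume a: "X \<in> Ob" "Y \<in> Ob"
  have "I (TO Y) \<otimes> E X = ev X (TO Y \<odot> TO X) \<cdot> ((hm (I X) (I (TO Y) \<otimes> E X) \<cdot> (cv X (TO Y) \<cdot> I (TO Y))) \<otimes> I X)"
    using a transpose_coev[of X "I (TO Y) \<otimes> E X" "I (TO Y)"] by simp
  also have "\<dots> = ev X (TO Y \<odot> TO X) \<cdot> ((hm (I X) (H Y X) \<cdot> (s X (Y \<odot> TO X) \<cdot> T (cv (TO X) Y))) \<otimes> I X)"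
    using a antipode_ax2 by simp
  also have "\<dots> = H Y X \<cdot> (sigma X (Y \<odot> TO X) \<cdot> (T (cv (TO X) Y) \<otimes> I X))"
    using a by (simp add: transpose_hm) (simp add: sigma_comp)
  finally show ?thesis by simp
qed

text \<open>Axiom (1) at TX, combined with associativity of \<mu>: sigma inverts the multiplication
  \<mu>_X in the second tensor factor.\<close>

lemma sigma_mu: assumes X: "X \<in> Ob" and Y: "Y \<in> Ob"
  shows "sigma (TO X) Y \<cdot> ((T (hm (M X) (I Y)) \<otimes> M X) \<cdot> T2 (IH (TO X) Y) (TO X)) = T (ev (TO X) Y)"
proof -
  let ?a = "hm (M X) (I Y)" and ?b = "hm (T (M X)) (I Y)" and ?c = "hm (M (TO X)) (I Y)"
  let ?P = "IH (TO X) Y" and ?P2 = "IH (TO (TO X)) Y"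
  have split_mu: "T ?a \<otimes> M X = (I (TO ?P2) \<otimes> M X) \<cdot> (T ?a \<otimes> I (TO (TO X)))"
    by (rule tensor_fst_then_snd[symmetric]) (use X Y in simp_all)
  have dinat_mu: "sigma (TO X) Y \<cdot> (I (TO ?P2) \<otimes> M X) = sigma (TO (TO X)) Y \<cdot> (T ?b \<otimes> I (TO (TO X)))"
    using X Y sigma_nat_source[of "M X" Y] by simp
  have hm_mu_assoc: "?b \<cdot> ?a = ?c \<cdot> ?a"
    using X Y by (simp add: hm_comp M_assoc)
  have mu_assoc_T: "(T ?b \<otimes> I (TO (TO X))) \<cdot> (T ?a \<otimes> I (TO (TO X))) = (T ?c \<otimes> I (TO (TO X))) \<cdot> (T ?a \<otimes> I (TO (TO X)))"
    using X Y by (simp add: tensor_id_comp T_cmp[symmetric] hm_mu_assoc)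
  have T2_natural: "(T ?a \<otimes> I (TO (TO X))) \<cdot> T2 ?P (TO X) = T2 ?P2 (TO X) \<cdot> T (?a \<otimes> I (TO X))"
    using X Y T2_nat[of ?a "I (TO X)"] by simp
  have axiom1_TX: "sigma (TO (TO X)) Y \<cdot> ((T ?c \<otimes> I (TO (TO X))) \<cdot> T2 ?P2 (TO X)) = T (ev (TO X) Y \<cdot> (hm (E (TO X)) (I Y) \<otimes> I (TO X)))"
    using X Y sigma_ax1[of "TO X" Y] by simp
  have eta_mu_hm: "hm (E (TO X)) (I Y) \<cdot> ?a = I ?P"
    using X Y by (simp add: hm_comp)
  have "sigma (TO X) Y \<cdot> ((T ?a \<otimes> M X) \<cdot> T2 ?P (TO X)) =
     sigma (TO X) Y \<cdot> (I (TO ?P2) \<otimes> M X) \<cdot> (T ?a \<otimes> I (TO (TO X))) \<cdot> T2 ?P (TO X)"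
    using X Y by (simp add: split_mu)
  also have "\<dots> = sigma (TO (TO X)) Y \<cdot> (T ?b \<otimes> I (TO (TO X))) \<cdot> (T ?a \<otimes> I (TO (TO X))) \<cdot> T2 ?P (TO X)"
    using X Y by (simp add: reassoc[OF dinat_mu])
  also have "\<dots> = sigma (TO (TO X)) Y \<cdot> (T ?c \<otimes> I (TO (TO X))) \<cdot> (T ?a \<otimes> I (TO (TO X))) \<cdot> T2 ?P (TO X)"
    using X Y by (simp add: reassoc[OF mu_assoc_T])
  also have "\<dots> = sigma (TO (TO X)) Y \<cdot> (T ?c \<otimes> I (TO (TO X))) \<cdot> T2 ?P2 (TO X) \<cdot> T (?a \<otimes> I (TO X))"
    using X Y by (simp add: T2_natural)
  also have "\<dots> = T (ev (TO X) Y \<cdot> (hm (E (TO X)) (I Y) \<otimes> I (TO X))) \<cdot> T (?a \<otimes> I (TO X))"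
    using X Y by (simp add: reassoc2[OF axiom1_TX])
  also have "\<dots> = T (ev (TO X) Y \<cdot> ((hm (E (TO X)) (I Y) \<cdot> ?a) \<otimes> I (TO X)))"
    using X Y by (simp add: T_cmp tensor_id_comp[symmetric])
  also have "\<dots> = T (ev (TO X) Y)"
    using X Y by (simp add: eta_mu_hm)
  finally show ?thesis .
qed

text \<open>sigma X Y factors through sigma (TO X) Y: use dinaturality of sigma along \<eta>_X and
  [\<eta>_X,Y] [\<mu>_X,Y] = id (a unit law of the monad).\<close>

lemma sigma_TX: assumes X: "X \<in> Ob" and Y: "Y \<in> Ob"
  shows "sigma X Y = sigma (TO X) Y \<cdot> (T (hm (M X) (I Y)) \<otimes> E X)"
proof -
  let ?a = "hm (M X) (I Y)" and ?b = "hm (T (E X)) (I Y)"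
  have split_eta: "T ?a \<otimes> E X = (I (TO (IH (TO (TO X)) Y)) \<otimes> E X) \<cdot> (T ?a \<otimes> I X)"
    using X Y tensor_fst_then_snd[of "T ?a" "E X"] by simp
  have dinat_eta: "sigma (TO X) Y \<cdot> (I (TO (IH (TO (TO X)) Y)) \<otimes> E X) = sigma X Y \<cdot> (T ?b \<otimes> I X)"
    using X Y sigma_nat_source[of "E X" Y] by simp
  have hm_eta_mu: "?b \<cdot> ?a = I (IH (TO X) Y)"
    using X Y by (simp add: hm_comp)
  have eta_mu_T: "(T ?b \<otimes> I X) \<cdot> (T ?a \<otimes> I X) = I (TO (IH (TO X) Y) \<odot> X)"
    using X Y by (simp add: tensor_id_comp T_cmp[symmetric] hm_eta_mu)
  have "sigma (TO X) Y \<cdot> (T ?a \<otimes> E X) = sigma (TO X) Y \<cdot> (I (TO (IH (TO (TO X)) Y)) \<otimes> E X) \<cdot> (T ?a \<otimes> I X)"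
    using X Y by (simp add: split_eta)
  also have "\<dots> = sigma X Y \<cdot> (T ?b \<otimes> I X) \<cdot> (T ?a \<otimes> I X)"
    using X Y by (simp add: reassoc[OF dinat_eta])
  also have "\<dots> = sigma X Y"
    using X Y by (simp add: eta_mu_T)
  finally show ?thesis by simp
qed

definition Hinv where
  "Hinv A X = sigma (TO X) (A \<odot> TO X) \<cdot> ((T (hm (M X) (I (A \<odot> TO X))) \<otimes> I (TO X)) \<cdot> (T (cv (TO X) A) \<otimes> I (TO X)))"

lemma Hinv_arr[simp]: "A \<in> Ob \<Longrightarrow> X \<in> Ob \<Longrightarrow> Hinv A X \<in> Ar"
  and Hinv_dm[simp]: "A \<in> Ob \<Longrightarrow> X \<in> Ob \<Longrightarrow> Dm (Hinv A X) = TO A \<odot> TO X"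
  and Hinv_cd[simp]: "A \<in> Ob \<Longrightarrow> X \<in> Ob \<Longrightarrow> Cd (Hinv A X) = TO (A \<odot> TO X)"
  unfolding Hinv_def by simp_all

lemma Hinv_H: assumes A: "A \<in> Ob" and X: "X \<in> Ob" shows "Hinv A X \<cdot> H A X = I (TO (A \<odot> TO X))"
proof -
  let ?Y = "A \<odot> TO X"
  let ?a = "hm (M X) (I ?Y)" and ?k = "cv (TO X) A" and ?P = "IH (TO X) ?Y"
  have coev_mu: "(T ?k \<otimes> I (TO X)) \<cdot> (I (TO A) \<otimes> M X) = (I (TO ?P) \<otimes> M X) \<cdot> (T ?k \<otimes> I (TO (TO X)))"
    using A X interchange[of "I (TO A)" "T ?k" "M X" "I (TO X)"] interchange[of "T ?k" "I (TO ?P)" "I (TO (TO X))" "M X"] by simp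
  have mu_merge: "(T ?a \<otimes> I (TO X)) \<cdot> (I (TO ?P) \<otimes> M X) = T ?a \<otimes> M X"
    using A X interchange[of "I (TO ?P)" "T ?a" "M X" "I (TO X)"] by simp
  have T2_natural: "(T ?k \<otimes> I (TO (TO X))) \<cdot> T2 A (TO X) = T2 ?P (TO X) \<cdot> T (?k \<otimes> I (TO X))"
    using A X T2_nat[of ?k "I (TO X)"] by simp
  have "Hinv A X \<cdot> H A X = sigma (TO X) ?Y \<cdot> (T ?a \<otimes> I (TO X)) \<cdot> (I (TO ?P) \<otimes> M X) \<cdot> (T ?k \<otimes> I (TO (TO X))) \<cdot> T2 A (TO X)"
    unfolding Hinv_def using A X by (simp add: reassoc[OF coev_mu])
  also have "\<dots> = sigma (TO X) ?Y \<cdot> (T ?a \<otimes> M X) \<cdot> T2 ?P (TO X) \<cdot> T (?k \<otimes> I (TO X))"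
    using A X by (simp add: reassoc[OF mu_merge] T2_natural)
  also have "\<dots> = T (ev (TO X) ?Y) \<cdot> T (?k \<otimes> I (TO X))"
    using A X by (simp add: reassoc2[OF sigma_mu])
  also have "\<dots> = I (TO ?Y)"
    using A X by (simp add: T_cmp[symmetric] coev_ev_at)
  finally show ?thesis .
qed

lemma H_left_cancel: assumes X: "X \<in> Ob" and Y: "Y \<in> Ob" and w: "w \<in> Ar" "Cd w = TO (Y \<odot> TO X)"
    and h: "H Y X \<cdot> w = I (TO Y) \<otimes> E X"
  shows "w = Hinv Y X \<cdot> (I (TO Y) \<otimes> E X)"
proof -
  have "w = (Hinv Y X \<cdot> H Y X) \<cdot> w"
    using X Y w by (simp only: Hinv_H) simp
  also have "\<dots> = Hinv Y X \<cdot> (H Y X \<cdot> w)"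
    using X Y w by simp
  finally show ?thesis using h by simp
qed

text \<open>\<dots> so by axiom (2) the composite sigma \<cdot> (T coev \<otimes> X) equals Hinv (TZ \<otimes> \<eta>_X).  As H does
  not involve s, the left inverse built from any other antipode yields the same value: this is
  the heart of uniqueness.\<close>

lemma sigma_coev:
  assumes X: "X \<in> Ob" and Z: "Z \<in> Ob"
  shows "sigma X (Z \<odot> TO X) \<cdot> (T (cv (TO X) Z) \<otimes> I X) = Hinv Z X \<cdot> (I (TO Z) \<otimes> E X)"
  by (rule H_left_cancel[OF X Z _ _ sigma_ax2[OF X Z]]) (use X Z in simp_all)

text \<open>By naturality and the triangle identity, sigma is recovered from its value on coevaluations.\<close>

lemma sigma_from_coev: assumes X: "X \<in> Ob" and Z: "Z \<in> Ob"
  shows "sigma X Z = T (ev (TO X) Z) \<cdot> (sigma X (IH (TO X) Z \<odot> TO X) \<cdot> (T (cv (TO X) (IH (TO X) Z)) \<otimes> I X))"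
proof -
  have nat: "T (ev (TO X) Z) \<cdot> sigma X (IH (TO X) Z \<odot> TO X) = sigma X Z \<cdot> (T (hm (I (TO X)) (ev (TO X) Z)) \<otimes> I X)"
    using X Z sigma_nat_target[of X "ev (TO X) Z"] by simp
  have "T (ev (TO X) Z) \<cdot> (sigma X (IH (TO X) Z \<odot> TO X) \<cdot> (T (cv (TO X) (IH (TO X) Z)) \<otimes> I X)) =
     sigma X Z \<cdot> (T (hm (I (TO X)) (ev (TO X) Z)) \<otimes> I X) \<cdot> (T (cv (TO X) (IH (TO X) Z)) \<otimes> I X)"
    using X Z by (simp add: reassoc[OF nat])
  also have "\<dots> = sigma X Z"
    using X Z by (simp add: tensor_id_comp T_cmp[symmetric] triangle)
  finally show ?thesis by simp
qed

text \<open>Part (a): a left antipode is unique.  Hinv Z X \<cdot> (TZ \<otimes> \<eta>_X) is the unique solution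
  of H w = TZ \<otimes> \<eta>_X, so it is the same for any two antipodes.\<close>

lemma antipode_unique:
  assumes a: "left_antipode C L B s'" and X: "X \<in> Ob" and Y: "Y \<in> Ob"
  shows "s' X Y = s X Y"
proof -
  interpret s': left_antipode_ctx C L B s' using SM LC BM a by unfold_locales
  let ?Q = "IH (TO X) Y"
  have coev_eq: "s'.sigma X (?Q \<odot> TO X) \<cdot> (T (cv (TO X) ?Q) \<otimes> I X) =
      sigma X (?Q \<odot> TO X) \<cdot> (T (cv (TO X) ?Q) \<otimes> I X)"
  proof -
    have "s'.sigma X (?Q \<odot> TO X) \<cdot> (T (cv (TO X) ?Q) \<otimes> I X) = s'.Hinv ?Q X \<cdot> (I (TO ?Q) \<otimes> E X)"
      using s'.sigma_coev X Y by simp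
    also have "\<dots> = sigma X (?Q \<odot> TO X) \<cdot> (T (cv (TO X) ?Q) \<otimes> I X)"
      by (rule s'.H_left_cancel[OF X _ _ _ sigma_ax2, symmetric]) (use X Y in simp_all)
    finally show ?thesis .
  qed
  have "s'.sigma X Y = sigma X Y"
    using s'.sigma_from_coev[OF X Y] sigma_from_coev[OF X Y] coev_eq by simp
  then have "ev X (TO Y) \<cdot> (s' X Y \<otimes> I X) = ev X (TO Y) \<cdot> (s X Y \<otimes> I X)"
    unfolding sigma_def s'.sigma_def .
  then show ?thesis by (rule transpose_inj[OF X, rotated -1]) (use X Y in simp_all)
qed

end

locale left_hopf_ctx = left_antipode_ctx + assumes LH: "left_hopf C B"
begin

lemma H_Hinv: assumes A: "A \<in> Ob" and X: "X \<in> Ob"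
  shows "(I (TO A) \<otimes> M X) \<cdot> (T2 A (TO X) \<cdot> Hinv A X) = I (TO A \<odot> TO X)"
proof -
  have "iso C (H A X)" using LH A X unfolding left_hopf_def by blast
  then obtain g where g: "g \<in> Ar" "Dm g = TO A \<odot> TO X" "Cd g = TO (A \<odot> TO X)"
    "g \<cdot> H A X = I (TO (A \<odot> TO X))" "H A X \<cdot> g = I (TO A \<odot> TO X)"
    unfolding iso_def hom_def using A X by auto
  have "Hinv A X = Hinv A X \<cdot> (H A X \<cdot> g)" using g A X by simp
  also have "\<dots> = (Hinv A X \<cdot> H A X) \<cdot> g" using g A X by simp
  also have "\<dots> = g" using g A X Hinv_H by simp
  finally have "Hinv A X = g" .
  then show ?thesis using g A X by simp
qed
lemmas H_Hinv_reassoc = H_Hinv reassoc2[OF H_Hinv]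

text \<open>Hence Hinv inherits from H naturality, compatibility with \<mu> and compatibility with T_2.\<close>

lemma Hinv_nat: assumes f: "f \<in> Ar" and X: "X \<in> Ob"
  shows "Hinv (Cd f) X \<cdot> (T f \<otimes> I (TO X)) = T (f \<otimes> I (TO X)) \<cdot> Hinv (Dm f) X"
proof -
  have nat: "(I (TO (Cd f)) \<otimes> M X) \<cdot> (T2 (Cd f) (TO X) \<cdot> T (f \<otimes> I (TO X))) =
      (T f \<otimes> I (TO X)) \<cdot> ((I (TO (Dm f)) \<otimes> M X) \<cdot> T2 (Dm f) (TO X))"
    using H_nat[OF f X] f X by simp
  have "Hinv (Cd f) X \<cdot> (T f \<otimes> I (TO X)) =
      Hinv (Cd f) X \<cdot> (T f \<otimes> I (TO X)) \<cdot> (I (TO (Dm f)) \<otimes> M X) \<cdot> T2 (Dm f) (TO X) \<cdot> Hinv (Dm f) X"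
    using f X by (simp add: H_Hinv_reassoc)
  also have "\<dots> = Hinv (Cd f) X \<cdot> (I (TO (Cd f)) \<otimes> M X) \<cdot> T2 (Cd f) (TO X) \<cdot> T (f \<otimes> I (TO X)) \<cdot> Hinv (Dm f) X"
    using f X by (simp add: reassoc2[OF nat[symmetric]])
  also have "\<dots> = T (f \<otimes> I (TO X)) \<cdot> Hinv (Dm f) X"
    using f X by (simp add: reassoc2[OF Hinv_H])
  finally show ?thesis .
qed

lemma Hinv_mu: assumes A: "A \<in> Ob" and X: "X \<in> Ob"
  shows "Hinv A X \<cdot> (M A \<otimes> I (TO X)) = M (A \<odot> TO X) \<cdot> (T (Hinv A X) \<cdot> Hinv (TO A) X)"
proof -
  have H_mu_expanded: "(I (TO A) \<otimes> M X) \<cdot> (T2 A (TO X) \<cdot> M (A \<odot> TO X)) =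
     (M A \<otimes> I (TO X)) \<cdot> (I (TO (TO A)) \<otimes> M X) \<cdot> T2 (TO A) (TO X) \<cdot> T (I (TO A) \<otimes> M X) \<cdot> T (T2 A (TO X))"
    using A X H_mu by (simp add: T_cmp)
  have T_H_Hinv: "T (I (TO A) \<otimes> M X) \<cdot> (T (T2 A (TO X)) \<cdot> T (Hinv A X)) = I (TO (TO A \<odot> TO X))"
  proof -
    have "T (I (TO A) \<otimes> M X) \<cdot> (T (T2 A (TO X)) \<cdot> T (Hinv A X)) = T ((I (TO A) \<otimes> M X) \<cdot> (T2 A (TO X) \<cdot> Hinv A X))"
      using A X by (simp add: T_cmp)
    then show ?thesis using A X by (simp add: H_Hinv)
  qed
  have "M (A \<odot> TO X) \<cdot> (T (Hinv A X) \<cdot> Hinv (TO A) X) = Hinv A X \<cdot> (I (TO A) \<otimes> M X) \<cdot> T2 A (TO X) \<cdot> M (A \<odot> TO X) \<cdot> T (Hinv A X) \<cdot> Hinv (TO A) X"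
    using A X by (simp add: reassoc2[OF Hinv_H])
  also have "\<dots> = Hinv A X \<cdot> (M A \<otimes> I (TO X)) \<cdot> (I (TO (TO A)) \<otimes> M X) \<cdot> T2 (TO A) (TO X) \<cdot> T (I (TO A) \<otimes> M X) \<cdot> T (T2 A (TO X)) \<cdot> T (Hinv A X) \<cdot> Hinv (TO A) X"
    using A X by (simp add: reassoc2[OF H_mu_expanded])
  also have "\<dots> = Hinv A X \<cdot> (M A \<otimes> I (TO X)) \<cdot> (I (TO (TO A)) \<otimes> M X) \<cdot> T2 (TO A) (TO X) \<cdot> Hinv (TO A) X"
    using A X by (simp add: reassoc2[OF T_H_Hinv])
  also have "\<dots> = Hinv A X \<cdot> (M A \<otimes> I (TO X))"
    using A X by (simp add: H_Hinv_reassoc)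
  finally show ?thesis ..
qed

lemma Hinv_tensor: assumes Q: "Q \<in> Ob" and X: "X \<in> Ob" and Y: "Y \<in> Ob"
  shows "T (I Q \<otimes> T2 X Y) \<cdot> (Hinv Q (X \<odot> Y) \<cdot> (I (TO Q) \<otimes> E (X \<odot> Y))) =
         Hinv (Q \<odot> TO X) Y \<cdot> ((Hinv Q X \<otimes> I (TO Y)) \<cdot> (I (TO Q) \<otimes> (E X \<otimes> E Y)))"
proof -
  have Hinv_H_tensor_Y: "(Hinv Q X \<otimes> I (TO Y)) \<cdot> ((I (TO Q) \<otimes> (M X \<otimes> I (TO Y))) \<cdot> (T2 Q (TO X) \<otimes> I (TO Y))) = I (TO (Q \<odot> TO X) \<odot> TO Y)"
  proof -
    have a: "(I (TO Q) \<otimes> M X) \<otimes> I (TO Y) = I (TO Q) \<otimes> (M X \<otimes> I (TO Y))"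
      by (rule tar_assoc) (use Q X Y in simp_all)
    have b: "((I (TO Q) \<otimes> M X) \<otimes> I (TO Y)) \<cdot> (T2 Q (TO X) \<otimes> I (TO Y)) = ((I (TO Q) \<otimes> M X) \<cdot> T2 Q (TO X)) \<otimes> I (TO Y)"
      by (rule tensor_id_comp) (use Q X Y in simp_all)
    have c: "(Hinv Q X \<otimes> I (TO Y)) \<cdot> (((I (TO Q) \<otimes> M X) \<cdot> T2 Q (TO X)) \<otimes> I (TO Y)) = (Hinv Q X \<cdot> ((I (TO Q) \<otimes> M X) \<cdot> T2 Q (TO X))) \<otimes> I (TO Y)"
      by (rule tensor_id_comp) (use Q X Y in simp_all)
    have "(Hinv Q X \<otimes> I (TO Y)) \<cdot> ((I (TO Q) \<otimes> (M X \<otimes> I (TO Y))) \<cdot> (T2 Q (TO X) \<otimes> I (TO Y))) =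
       (Hinv Q X \<cdot> ((I (TO Q) \<otimes> M X) \<cdot> T2 Q (TO X))) \<otimes> I (TO Y)"
      unfolding a[symmetric] b c ..
    also have "\<dots> = I (TO (Q \<odot> TO X) \<odot> TO Y)" using Q X Y by (simp add: Hinv_H)
    finally show ?thesis .
  qed
  have H_tensor_comp: "(I (TO Q) \<otimes> (M X \<otimes> I (TO Y))) \<cdot> ((T2 Q (TO X) \<otimes> I (TO Y)) \<cdot> ((I (TO (Q \<odot> TO X)) \<otimes> M Y) \<cdot>
          (T2 (Q \<odot> TO X) (TO Y) \<cdot> (T (I Q \<otimes> T2 X Y) \<cdot> r)))) =
         (I (TO Q) \<otimes> T2 X Y) \<cdot> ((I (TO Q) \<otimes> M (X \<odot> Y)) \<cdot> (T2 Q (TO (X \<odot> Y)) \<cdot> r))"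
    if r: "r \<in> Ar" "Cd r = TO (Q \<odot> TO (X \<odot> Y))" for r
  proof -
    have "((I (TO Q) \<otimes> (M X \<otimes> I (TO Y))) \<cdot> (T2 Q (TO X) \<otimes> I (TO Y)) \<cdot> (I (TO (Q \<odot> TO X)) \<otimes> M Y) \<cdot>
          T2 (Q \<odot> TO X) (TO Y) \<cdot> T (I Q \<otimes> T2 X Y)) \<cdot> r =
         ((I (TO Q) \<otimes> T2 X Y) \<cdot> (I (TO Q) \<otimes> M (X \<odot> Y)) \<cdot> T2 Q (TO (X \<odot> Y))) \<cdot> r"
      by (simp only: H_tensor[OF Q X Y])
    then show ?thesis using Q X Y r by simp
  qed
  have eta_comon: "(I (TO Q) \<otimes> T2 X Y) \<cdot> (I (TO Q) \<otimes> E (X \<odot> Y)) = I (TO Q) \<otimes> (E X \<otimes> E Y)"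
    using Q X Y by (simp add: id_tensor_comp E_comon)
  have "T (I Q \<otimes> T2 X Y) \<cdot> (Hinv Q (X \<odot> Y) \<cdot> (I (TO Q) \<otimes> E (X \<odot> Y))) =
     Hinv (Q \<odot> TO X) Y \<cdot> (Hinv Q X \<otimes> I (TO Y)) \<cdot> (I (TO Q) \<otimes> (M X \<otimes> I (TO Y))) \<cdot> (T2 Q (TO X) \<otimes> I (TO Y)) \<cdot>
       (I (TO (Q \<odot> TO X)) \<otimes> M Y) \<cdot> T2 (Q \<odot> TO X) (TO Y) \<cdot> T (I Q \<otimes> T2 X Y) \<cdot> Hinv Q (X \<odot> Y) \<cdot> (I (TO Q) \<otimes> E (X \<odot> Y))"
    using Q X Y by (simp add: reassoc2[OF Hinv_H_tensor_Y] reassoc2[OF Hinv_H])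
  also have "\<dots> = Hinv (Q \<odot> TO X) Y \<cdot> (Hinv Q X \<otimes> I (TO Y)) \<cdot> (I (TO Q) \<otimes> T2 X Y) \<cdot> (I (TO Q) \<otimes> M (X \<odot> Y)) \<cdot>
       T2 Q (TO (X \<odot> Y)) \<cdot> Hinv Q (X \<odot> Y) \<cdot> (I (TO Q) \<otimes> E (X \<odot> Y))"
    using Q X Y by (simp add: H_tensor_comp)
  also have "\<dots> = Hinv (Q \<odot> TO X) Y \<cdot> ((Hinv Q X \<otimes> I (TO Y)) \<cdot> (I (TO Q) \<otimes> (E X \<otimes> E Y)))"
    using Q X Y by (simp add: H_Hinv_reassoc eta_comon)
  finally show ?thesis .
qed

text \<open>The key formula: in the Hopf case the transposed antipode is
  sigma X Y = T(ev^{TX}_Y) Hinv (T[TX,Y] \<otimes> \<eta>_X).  It follows from sigma_TX and sigma_mu,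
  since (T[\<mu>_X,Y] \<otimes> TX) composed with H is the arrow inverted by sigma in sigma_mu.\<close>

lemma sigma_Hinv: assumes X: "X \<in> Ob" and Y: "Y \<in> Ob"
  shows "sigma (TO X) Y \<cdot> (T (hm (M X) (I Y)) \<otimes> I (TO X)) = T (ev (TO X) Y) \<cdot> Hinv (IH (TO X) Y) X"
proof -
  let ?a = "hm (M X) (I Y)" and ?P = "IH (TO X) Y"
  have e: "(T ?a \<otimes> I (TO X)) \<cdot> (I (TO ?P) \<otimes> M X) = T ?a \<otimes> M X"
    using X Y tensor_snd_then_fst[of "T ?a" "M X"] by simp
  have "sigma (TO X) Y \<cdot> (T ?a \<otimes> I (TO X)) = sigma (TO X) Y \<cdot> (T ?a \<otimes> I (TO X)) \<cdot> (I (TO ?P) \<otimes> M X) \<cdot> T2 ?P (TO X) \<cdot> Hinv ?P X"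
    using X Y by (simp add: H_Hinv_reassoc)
  also have "\<dots> = sigma (TO X) Y \<cdot> (T ?a \<otimes> M X) \<cdot> T2 ?P (TO X) \<cdot> Hinv ?P X"
    using X Y by (simp add: reassoc[OF e])
  also have "\<dots> = T (ev (TO X) Y) \<cdot> Hinv ?P X"
    using X Y by (simp add: reassoc2[OF sigma_mu])
  finally show ?thesis .
qed

lemma sigma_formula: assumes X: "X \<in> Ob" and Y: "Y \<in> Ob"
  shows "sigma X Y = T (ev (TO X) Y) \<cdot> (Hinv (IH (TO X) Y) X \<cdot> (I (TO (IH (TO X) Y)) \<otimes> E X))"
proof -
  let ?a = "hm (M X) (I Y)" and ?P = "IH (TO X) Y"
  have e: "T ?a \<otimes> E X = (T ?a \<otimes> I (TO X)) \<cdot> (I (TO ?P) \<otimes> E X)"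
    using X Y tensor_snd_then_fst[of "T ?a" "E X"] by simp
  have "sigma X Y = sigma (TO X) Y \<cdot> (T ?a \<otimes> I (TO X)) \<cdot> (I (TO ?P) \<otimes> E X)"
    using X Y sigma_TX[OF X Y] e by simp
  also have "\<dots> = T (ev (TO X) Y) \<cdot> (Hinv ?P X \<cdot> (I (TO ?P) \<otimes> E X))"
    using X Y by (simp add: reassoc[OF sigma_Hinv])
  finally show ?thesis .
qed

lemma sigma_precomp:
  assumes X: "X \<in> Ob" and P: "P \<in> Ob" and c: "c \<in> Ar" "Cd c = IH (TO X) P"
  shows "sigma X P \<cdot> (T c \<otimes> I X) =
    T (ev (TO X) P \<cdot> (c \<otimes> I (TO X))) \<cdot> (Hinv (Dm c) X \<cdot> (I (TO (Dm c)) \<otimes> E X))"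
proof -
  let ?Q = "Dm c" and ?R = "IH (TO X) P"
  have slide: "(I (TO ?R) \<otimes> E X) \<cdot> (T c \<otimes> I X) = (T c \<otimes> I (TO X)) \<cdot> (I (TO ?Q) \<otimes> E X)"
    using X P c tensor_slide[of "T c" "E X"] by simp
  have nat: "Hinv ?R X \<cdot> (T c \<otimes> I (TO X)) = T (c \<otimes> I (TO X)) \<cdot> Hinv ?Q X"
    using Hinv_nat[of c X] X c by simp
  have "sigma X P \<cdot> (T c \<otimes> I X) = T (ev (TO X) P) \<cdot> Hinv ?R X \<cdot> (I (TO ?R) \<otimes> E X) \<cdot> (T c \<otimes> I X)"
    using X P c sigma_formula[OF X P] by simp
  also have "\<dots> = T (ev (TO X) P) \<cdot> Hinv ?R X \<cdot> (T c \<otimes> I (TO X)) \<cdot> (I (TO ?Q) \<otimes> E X)"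
    using X P c by (simp add: slide)
  also have "\<dots> = T (ev (TO X) P) \<cdot> T (c \<otimes> I (TO X)) \<cdot> Hinv ?Q X \<cdot> (I (TO ?Q) \<otimes> E X)"
    using X P c by (simp add: reassoc[OF nat])
  also have "\<dots> = T (ev (TO X) P \<cdot> (c \<otimes> I (TO X))) \<cdot> (Hinv ?Q X \<cdot> (I (TO ?Q) \<otimes> E X))"
    using X P c by (simp add: T_cmp)
  finally show ?thesis .
qed

lemma antipode_eta: assumes X: "X \<in> Ob" and Y: "Y \<in> Ob"
  shows "s X Y \<cdot> E (IH (TO X) Y) = hm (E X) (E Y)"
proof -
  let ?P = "IH (TO X) Y"
  have H_eta: "H ?P X \<cdot> E (?P \<odot> TO X) = E ?P \<otimes> I (TO X)"
  proof -
    have "H ?P X \<cdot> E (?P \<odot> TO X) = (I (TO ?P) \<otimes> M X) \<cdot> (E ?P \<otimes> E (TO X))"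
      using X Y by (simp add: E_comon)
    also have "\<dots> = (I (TO ?P) \<cdot> E ?P) \<otimes> (M X \<cdot> E (TO X))"
      by (rule interchange[symmetric]) (use X Y in simp_all)
    finally show ?thesis using X Y by simp
  qed
  have split_eta: "E ?P \<otimes> E X = (E ?P \<otimes> I (TO X)) \<cdot> (I ?P \<otimes> E X)"
    using X Y tensor_snd_then_fst[of "E ?P" "E X"] by simp
  have Hinv_eta: "Hinv ?P X \<cdot> (E ?P \<otimes> E X) = E (?P \<odot> TO X) \<cdot> (I ?P \<otimes> E X)"
  proof -
    have "Hinv ?P X \<cdot> (E ?P \<otimes> E X) = Hinv ?P X \<cdot> (H ?P X \<cdot> E (?P \<odot> TO X)) \<cdot> (I ?P \<otimes> E X)"
      unfolding H_eta split_eta using X Y by simp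
    also have "\<dots> = E (?P \<odot> TO X) \<cdot> (I ?P \<otimes> E X)"
      using X Y by (simp add: reassoc2[OF Hinv_H])
    finally show ?thesis .
  qed
  have merge_eta: "(I (TO ?P) \<otimes> E X) \<cdot> (E ?P \<otimes> I X) = E ?P \<otimes> E X"
    using X Y tensor_fst_then_snd[of "E ?P" "E X"] by simp
  have eta_nat: "T (ev (TO X) Y) \<cdot> E (?P \<odot> TO X) = E Y \<cdot> ev (TO X) Y"
    using X Y E_nat[of "ev (TO X) Y"] by simp
  have "ev X (TO Y) \<cdot> ((s X Y \<cdot> E ?P) \<otimes> I X) = sigma X Y \<cdot> (E ?P \<otimes> I X)"
    using X Y by (simp add: sigma_comp)
  also have "\<dots> = T (ev (TO X) Y) \<cdot> Hinv ?P X \<cdot> (I (TO ?P) \<otimes> E X) \<cdot> (E ?P \<otimes> I X)"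
    using X Y sigma_formula[OF X Y] by simp
  also have "\<dots> = T (ev (TO X) Y) \<cdot> E (?P \<odot> TO X) \<cdot> (I ?P \<otimes> E X)"
    using X Y by (simp add: merge_eta Hinv_eta)
  also have "\<dots> = E Y \<cdot> ev (TO X) Y \<cdot> (I ?P \<otimes> E X)"
    using X Y by (simp add: reassoc[OF eta_nat])
  also have "\<dots> = ev X (TO Y) \<cdot> (hm (E X) (E Y) \<otimes> I X)"
    using X Y by (simp add: hm_ev_at)
  finally have fin: "ev X (TO Y) \<cdot> ((s X Y \<cdot> E ?P) \<otimes> I X) = ev X (TO Y) \<cdot> (hm (E X) (E Y) \<otimes> I X)" .
  show ?thesis by (rule transpose_inj[OF _ _ _ _ _ _ _ fin]) (use X Y in simp_all)
qed

lemma antipode_unit: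
  assumes X: "X \<in> Ob"
  shows "ev U (TO X) \<cdot> (s U X \<cdot> T (hm T0 (I X))) = T (ev U X)"
proof -
  let ?h = "hm T0 (I X)" and ?Q = "IH U X"
  have ev_h: "ev (TO U) X \<cdot> (?h \<otimes> I (TO U)) = ev U X \<cdot> (I ?Q \<otimes> T0)"
    using X by (simp add: hm_ev_at)
  have counit: "T (I ?Q \<otimes> T0) \<cdot> Hinv ?Q U = I (TO ?Q) \<otimes> T0"
  proof -
    have "I (TO ?Q) \<otimes> T0 = (I (TO ?Q) \<otimes> T0) \<cdot> (I (TO ?Q) \<otimes> M U) \<cdot> T2 ?Q (TO U) \<cdot> Hinv ?Q U"
      using X by (simp add: H_Hinv_reassoc)
    also have "\<dots> = T (I ?Q \<otimes> T0) \<cdot> Hinv ?Q U"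
      using X by (simp add: reassoc2[OF H_counit])
    finally show ?thesis ..
  qed
  have unit: "(I (TO ?Q) \<otimes> T0) \<cdot> (I (TO ?Q) \<otimes> E U) = I (TO ?Q)"
    using X id_tensor_comp[of "TO ?Q" "E U" T0] by (simp add: E_T0)
  have "ev U (TO X) \<cdot> (s U X \<cdot> T ?h) = sigma U X \<cdot> (T ?h \<otimes> I U)"
    using X sigma_comp[of U X "T ?h"] by simp
  also have "\<dots> = T (ev U X \<cdot> (I ?Q \<otimes> T0)) \<cdot> (Hinv ?Q U \<cdot> (I (TO ?Q) \<otimes> E U))"
    using X sigma_precomp[of U X ?h] ev_h by simp
  also have "\<dots> = T (ev U X) \<cdot> ((I (TO ?Q) \<otimes> T0) \<cdot> (I (TO ?Q) \<otimes> E U))"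
    using X by (simp add: T_cmp reassoc[OF counit])
  also have "\<dots> = T (ev U X)"
    using X by (simp add: unit)
  finally show ?thesis .
qed

text \<open>Part (b), first identity: compatibility of s with \<mu>.  Both sides are transposed and
  computed with sigma_formula; on the right, sigma_Hinv and Hinv_mu reduce T(s_{TX,Y}) to \<mu>.\<close>

lemma antipode_mu:
  assumes X: "X \<in> Ob" and Y: "Y \<in> Ob"
  shows "s X Y \<cdot> M (IH (TO X) Y) =
    hm (I X) (M Y) \<cdot> (s X (TO Y) \<cdot> (T (s (TO X) Y) \<cdot> T (T (hm (M X) (I Y)))))"
proof -
  let ?a = "hm (M X) (I Y)" and ?P = "IH (TO X) Y"
  let ?R = "s (TO X) Y \<cdot> T ?a"
  have R: "?R \<in> Ar" "Dm ?R = TO ?P" "Cd ?R = IH (TO X) (TO Y)" using X Y by simp_all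
  have ev_R: "ev (TO X) (TO Y) \<cdot> (?R \<otimes> I (TO X)) = T (ev (TO X) Y) \<cdot> Hinv ?P X"
    using X Y by (simp add: sigma_comp sigma_Hinv)
  have slide: "(I (TO ?P) \<otimes> E X) \<cdot> (M ?P \<otimes> I X) = (M ?P \<otimes> I (TO X)) \<cdot> (I (TO (TO ?P)) \<otimes> E X)"
    using X Y tensor_slide[of "M ?P" "E X"] by simp
  have mu_nat: "T (ev (TO X) Y) \<cdot> M (?P \<odot> TO X) = M Y \<cdot> T (T (ev (TO X) Y))"
    using X Y M_nat[of "ev (TO X) Y"] by simp
  have "ev X (TO Y) \<cdot> ((s X Y \<cdot> M ?P) \<otimes> I X) = sigma X Y \<cdot> (M ?P \<otimes> I X)"
    using X Y by (simp add: sigma_comp)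
  also have "\<dots> = T (ev (TO X) Y) \<cdot> Hinv ?P X \<cdot> (M ?P \<otimes> I (TO X)) \<cdot> (I (TO (TO ?P)) \<otimes> E X)"
    using X Y sigma_formula[OF X Y] by (simp add: slide)
  also have "\<dots> = T (ev (TO X) Y) \<cdot> M (?P \<odot> TO X) \<cdot> T (Hinv ?P X) \<cdot> Hinv (TO ?P) X \<cdot> (I (TO (TO ?P)) \<otimes> E X)"
    using X Y by (simp add: reassoc[OF Hinv_mu])
  also have "\<dots> = M Y \<cdot> T (T (ev (TO X) Y) \<cdot> Hinv ?P X) \<cdot> Hinv (TO ?P) X \<cdot> (I (TO (TO ?P)) \<otimes> E X)"
    using X Y by (simp add: reassoc[OF mu_nat] T_cmp)
  also have "\<dots> = M Y \<cdot> sigma X (TO Y) \<cdot> (T ?R \<otimes> I X)"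
    using X Y R sigma_precomp[of X "TO Y" ?R] by (simp add: ev_R)
  also have "\<dots> = ev X (TO Y) \<cdot> ((hm (I X) (M Y) \<cdot> (s X (TO Y) \<cdot> (T (s (TO X) Y) \<cdot> T (T ?a)))) \<otimes> I X)"
    using X Y R by (simp add: transpose_hm sigma_comp T_cmp)
  finally show ?thesis by (rule transpose_inj[OF X, rotated -1]) (use X Y in simp_all)
qed

text \<open>Part (b), third identity: compatibility of s with T_2, up to currying.  The double
  transposes of both sides are reduced to the same composite by means of Hinv_tensor.\<close>

lemma antipode_tensor_lhs:
  assumes X: "X \<in> Ob" and Y: "Y \<in> Ob" and Z: "Z \<in> Ob"
  shows "ev Y (TO Z) \<cdot> ((ev X (IH Y (TO Z)) \<cdot>
      ((cur X Y (TO Z) \<cdot> (s (X \<odot> Y) Z \<cdot> T (hm (T2 X Y) (I Z)))) \<otimes> I X)) \<otimes> I Y) =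
    T (ev (TO X \<odot> TO Y) Z) \<cdot> Hinv (IH (TO X \<odot> TO Y) Z \<odot> TO X) Y \<cdot>
      (Hinv (IH (TO X \<odot> TO Y) Z) X \<otimes> I (TO Y)) \<cdot> (I (TO (IH (TO X \<odot> TO Y) Z)) \<otimes> (E X \<otimes> E Y))"
proof -
  let ?Q = "IH (TO X \<odot> TO Y) Z" and ?h = "hm (T2 X Y) (I Z)" and ?XY = "X \<odot> Y"
  have h: "?h \<in> Ar" "Dm ?h = ?Q" "Cd ?h = IH (TO ?XY) Z" using X Y Z by simp_all
  have ev_h: "ev (TO ?XY) Z \<cdot> (?h \<otimes> I (TO ?XY)) = ev (TO X \<odot> TO Y) Z \<cdot> (I ?Q \<otimes> T2 X Y)"
    using X Y Z by (simp add: hm_ev_at)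
  have "ev Y (TO Z) \<cdot> ((ev X (IH Y (TO Z)) \<cdot> ((cur X Y (TO Z) \<cdot> (s ?XY Z \<cdot> T ?h)) \<otimes> I X)) \<otimes> I Y) =
      ev ?XY (TO Z) \<cdot> ((s ?XY Z \<cdot> T ?h) \<otimes> I ?XY)"
    using X Y Z h by (simp add: cur_mate)
  also have "\<dots> = sigma ?XY Z \<cdot> (T ?h \<otimes> I ?XY)"
    using X Y Z h by (simp add: sigma_comp)
  also have "\<dots> = T (ev (TO X \<odot> TO Y) Z) \<cdot> T (I ?Q \<otimes> T2 X Y) \<cdot> Hinv ?Q ?XY \<cdot> (I (TO ?Q) \<otimes> E ?XY)"
    using X Y Z h sigma_precomp[of ?XY Z ?h] by (simp add: ev_h T_cmp)
  also have "\<dots> = T (ev (TO X \<odot> TO Y) Z) \<cdot> Hinv (?Q \<odot> TO X) Y \<cdot> (Hinv ?Q X \<otimes> I (TO Y)) \<cdot>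
      (I (TO ?Q) \<otimes> (E X \<otimes> E Y))"
    using X Y Z Hinv_tensor[of ?Q X Y] by simp
  finally show ?thesis .
qed

lemma antipode_tensor_rhs:
  assumes X: "X \<in> Ob" and Y: "Y \<in> Ob" and Z: "Z \<in> Ob"
  shows "ev Y (TO Z) \<cdot> ((ev X (IH Y (TO Z)) \<cdot>
      ((hm (I X) (s Y Z) \<cdot> (s X (IH (TO Y) Z) \<cdot> T (cur (TO X) (TO Y) Z))) \<otimes> I X)) \<otimes> I Y) =
    T (ev (TO X \<odot> TO Y) Z) \<cdot> Hinv (IH (TO X \<odot> TO Y) Z \<odot> TO X) Y \<cdot>
      (Hinv (IH (TO X \<odot> TO Y) Z) X \<otimes> I (TO Y)) \<cdot> (I (TO (IH (TO X \<odot> TO Y) Z)) \<otimes> (E X \<otimes> E Y))"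
proof -
  let ?Q = "IH (TO X \<odot> TO Y) Z" and ?Q' = "IH (TO Y) Z" and ?c = "cur (TO X) (TO Y) Z"
  let ?k = "ev (TO X) ?Q' \<cdot> (?c \<otimes> I (TO X))"
  let ?g = "Hinv ?Q X \<cdot> (I (TO ?Q) \<otimes> E X)"
  have k: "?k \<in> Ar" "Dm ?k = ?Q \<odot> TO X" "Cd ?k = ?Q'" using X Y Z by simp_all
  have ev_k: "ev (TO Y) Z \<cdot> (?k \<otimes> I (TO Y)) = ev (TO X \<odot> TO Y) Z"
    using cur_ev[of "TO X" "TO Y" Z] X Y Z by simp
  have eta_Y: "(I (TO (?Q \<odot> TO X)) \<otimes> E Y) \<cdot> (?g \<otimes> I Y) = (Hinv ?Q X \<otimes> I (TO Y)) \<cdot> (I (TO ?Q) \<otimes> (E X \<otimes> E Y))"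
  proof -
    have "(I (TO (?Q \<odot> TO X)) \<otimes> E Y) \<cdot> (?g \<otimes> I Y) = ?g \<otimes> E Y"
      using X Y Z tensor_fst_then_snd[of ?g "E Y"] by simp
    also have "\<dots> = (Hinv ?Q X \<otimes> I (TO Y)) \<cdot> ((I (TO ?Q) \<otimes> E X) \<otimes> E Y)"
      using X Y Z interchange[of "I (TO ?Q) \<otimes> E X" "Hinv ?Q X" "E Y" "I (TO Y)"] by simp
    finally show ?thesis using X Y Z by simp
  qed
  have inner: "ev X (IH Y (TO Z)) \<cdot> ((hm (I X) (s Y Z) \<cdot> (s X ?Q' \<cdot> T ?c)) \<otimes> I X) = s Y Z \<cdot> (T ?k \<cdot> ?g)"
  proof -
    have "ev X (IH Y (TO Z)) \<cdot> ((hm (I X) (s Y Z) \<cdot> (s X ?Q' \<cdot> T ?c)) \<otimes> I X) = s Y Z \<cdot> sigma X ?Q' \<cdot> (T ?c \<otimes> I X)"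
      using X Y Z by (simp add: transpose_hm sigma_comp)
    then show ?thesis using X Y Z sigma_precomp[of X ?Q' ?c] by simp
  qed
  have split: "(T ?k \<cdot> ?g) \<otimes> I Y = (T ?k \<otimes> I Y) \<cdot> (?g \<otimes> I Y)"
    using X Y Z k tensor_id_comp[of Y ?g "T ?k"] by simp
  have "ev Y (TO Z) \<cdot> ((s Y Z \<cdot> (T ?k \<cdot> ?g)) \<otimes> I Y) = sigma Y Z \<cdot> (T ?k \<otimes> I Y) \<cdot> (?g \<otimes> I Y)"
    using X Y Z k by (simp add: sigma_comp split)
  also have "\<dots> = T (ev (TO X \<odot> TO Y) Z) \<cdot> Hinv (?Q \<odot> TO X) Y \<cdot> (I (TO (?Q \<odot> TO X)) \<otimes> E Y) \<cdot> (?g \<otimes> I Y)"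
  proof -
    have prec: "sigma Y Z \<cdot> (T ?k \<otimes> I Y) = T (ev (TO X \<odot> TO Y) Z) \<cdot> (Hinv (?Q \<odot> TO X) Y \<cdot> (I (TO (?Q \<odot> TO X)) \<otimes> E Y))"
      using X Y Z k sigma_precomp[of Y Z ?k] by (simp add: ev_k)
    show ?thesis using X Y Z k by (simp add: reassoc[OF prec])
  qed
  also have "\<dots> = T (ev (TO X \<odot> TO Y) Z) \<cdot> Hinv (?Q \<odot> TO X) Y \<cdot> (Hinv ?Q X \<otimes> I (TO Y)) \<cdot> (I (TO ?Q) \<otimes> (E X \<otimes> E Y))"
    using X Y Z by (simp add: eta_Y)
  finally show ?thesis unfolding inner .
qed

lemma antipode_tensor:
  assumes X: "X \<in> Ob" and Y: "Y \<in> Ob" and Z: "Z \<in> Ob"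
  shows "cur X Y (TO Z) \<cdot> (s (X \<odot> Y) Z \<cdot> T (hm (T2 X Y) (I Z))) =
    hm (I X) (s Y Z) \<cdot> (s X (IH (TO Y) Z) \<cdot> T (cur (TO X) (TO Y) Z))"
  by (rule transpose2_inj[OF X Y _ _ _ _ _ _
        trans[OF antipode_tensor_lhs[OF X Y Z] antipode_tensor_rhs[OF X Y Z, symmetric]]])
    (use X Y Z in simp_all)

end

lemma left_antipode_unique:
  assumes "strict_moncat C" "left_closed C L" "bimonad C B"
    and "left_antipode C L B s" "left_antipode C L B s'" "X \<in> ob C" "Y \<in> ob C"
  shows "s X Y = s' X Y"
proof -
  interpret left_antipode_ctx C L B s using assms by unfold_locales
  show ?thesis using antipode_unique assms(5-7) by metis
qed

lemma left_hopf_antipode_identities: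
  assumes "strict_moncat C" "left_closed C L" "bimonad C B" "left_hopf C B"
    and "left_antipode C L B s" "X \<in> ob C" "Y \<in> ob C" "Z \<in> ob C"
  shows "cmp C (s X Y) (mu B (ihob L (Tob B X) Y)) =
           cmp C (ihmor C L (idm C X) (mu B Y))
             (cmp C (s X (Tob B Y))
               (cmp C (Tar B (s (Tob B X) Y)) (Tar B (Tar B (ihmor C L (mu B X) (idm C Y))))))
    \<and> cmp C (s X Y) (eta B (ihob L (Tob B X) Y)) = ihmor C L (eta B X) (eta B Y)
    \<and> cmp C (curry_iso C L X Y (Tob B Z))
           (cmp C (s (tob C X Y) Z) (Tar B (ihmor C L (Ttwo B X Y) (idm C Z)))) =
         cmp C (ihmor C L (idm C X) (s Y Z))
           (cmp C (s X (ihob L (Tob B Y) Z)) (Tar B (curry_iso C L (Tob B X) (Tob B Y) Z)))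
    \<and> cmp C (evm L (one C) (Tob B X))
           (cmp C (s (one C) X) (Tar B (ihmor C L (Tzero B) (idm C X)))) = Tar B (evm L (one C) X)"
proof -
  interpret left_hopf_ctx C L B s using assms by unfold_locales
  show ?thesis
    using antipode_mu antipode_eta antipode_tensor antipode_unit assms(6-8) by blast
qed

theorem mainTheorem7:
  fixes C :: "('o,'m) mcat" and L :: "('o,'m) lclosed" and B :: "('o,'m) bimon"
  assumes "strict_moncat C" and "left_closed C L" and "bimonad C B"
  shows
    "(\<forall>s s'. left_antipode C L B s \<and> left_antipode C L B s' \<longrightarrow>
        (\<forall>X\<in>ob C. \<forall>Y\<in>ob C. s X Y = s' X Y))
   \<and> (left_hopf C B \<longrightarrow>
       (\<forall>s. left_antipode C L B s \<longrightarrow>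
         (\<forall>X\<in>ob C. \<forall>Y\<in>ob C. \<forall>Z\<in>ob C.
            cmp C (s X Y) (mu B (ihob L (Tob B X) Y)) =
              cmp C (ihmor C L (idm C X) (mu B Y))
                (cmp C (s X (Tob B Y))
                  (cmp C (Tar B (s (Tob B X) Y))
                    (Tar B (Tar B (ihmor C L (mu B X) (idm C Y))))))
          \<and> cmp C (s X Y) (eta B (ihob L (Tob B X) Y)) = ihmor C L (eta B X) (eta B Y)
          \<and> cmp C (curry_iso C L X Y (Tob B Z))
              (cmp C (s (tob C X Y) Z) (Tar B (ihmor C L (Ttwo B X Y) (idm C Z)))) =
            cmp C (ihmor C L (idm C X) (s Y Z))
              (cmp C (s X (ihob L (Tob B Y) Z)) (Tar B (curry_iso C L (Tob B X) (Tob B Y) Z)))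
          \<and> cmp C (evm L (one C) (Tob B X))
              (cmp C (s (one C) X) (Tar B (ihmor C L (Tzero B) (idm C X)))) =
            Tar B (evm L (one C) X))))"
  using left_antipode_unique[OF assms] left_hopf_antipode_identities[OF assms] by blast

end
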